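(* Let $\Lambda$ be a unital commutative ring, $q\ge1$ an integer, $\mathfrak g$ a Lie algebra over $\Lambda$ and $\mathfrak h$ an ideal of $\mathfrak g$. There is a Lie action of $\mathfrak g$ on $\mathfrak h\otimes^q\mathfrak g$ given on generators by ${}^{g'}(h\otimes g)=[g',h]\otimes g+h\otimes[g',g]$ and ${}^{g}\{h\}=\{[g,h]\}$, and a Lie action of $\mathfrak g$ on $\mathfrak h\wedge^q\mathfrak g$ given by ${}^{g'}(h\wedge g)=[g',h]\wedge g+h\wedge[g',g]$ and ${}^{g}\{h\}=\{[g,h]\}$. With these actions, the homomorphisms $\xi^{\otimes}\colon\mathfrak h\otimes^q\mathfrak g\to\mathfrak g$ and $\xi^{\wedge}\colon\mathfrak h\wedge^q\mathfrak g\to\mathfrak g$ are $q$-crossed $\mathfrak g$-modules.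
   Context: All Lie algebras are over $\Lambda$. A Lie action of $\mathfrak g$ on $\mathfrak h$ is a $\Lambda$-bilinear map $(g,h)\mapsto{}^gh$ with ${}^{[g,g']}h={}^g({}^{g'}h)-{}^{g'}({}^gh)$ and ${}^g[h,h']=[{}^gh,h']+[h,{}^gh']$. A $q$-crossed $\mathfrak g$-module is a Lie homomorphism $\mu\colon\mathfrak k\to\mathfrak g$ with a Lie action of $\mathfrak g$ on $\mathfrak k$ such that $\mu({}^gk)=[g,\mu(k)]$, ${}^{\mu(k)}k'=[k,k']$ and $qk=0$ for all $g\in\mathfrak g$, $k,k'\in\mathfrak k$, $k\in\operatorname{Ker}\mu$ respectively. The non-abelian $q$-tensor product $\mathfrak h\otimes^q\mathfrak g$ is the Lie algebra generated by symbols $h\otimes g$ and $\{h\}$ ($h\in\mathfrak h$, $g\in\mathfrak g$) subject to, for all $h,h'\in\mathfrak h$, $g,g'\in\mathfrak g$, $\lambda,\lambda'\in\Lambda$: (1) $\lambda(h\otimes g)=\lambda h\otimes g=h\otimes\lambda g$; (2) $(h+h')\otimes g=h\otimes g+h'\otimes g$; (3) $h\otimes(g+g')=h\otimes g+h\otimes g'$; (4) $[h,h']\otimes g=h\otimes[h',g]-h'\otimes[h,g]$; (5) $h\otimes[g,g']=[g',h]\otimes g-[g,h]\otimes g'$; (6) $[h\otimes g,h'\otimes g']=[h,g]\otimes[h',g']$; (7) $[\{h'\},h\otimes g]=[qh',h]\otimes g+h\otimes[qh',g]$; (8) $\{\lambda h+\lambda'h'\}=\lambda\{h\}+\lambda'\{h'\}$;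 (9) $[\{h\},\{h'\}]=qh\otimes qh'$; (10) $\{[h,g]\}=q(h\otimes g)$. The $q$-exterior product $\mathfrak h\wedge^q\mathfrak g$ is its quotient by the relations $h\otimes h=0$ ($h\in\mathfrak h$), images written $h\wedge g,\{h\}$. The homomorphism $\xi^{\otimes}$ is given by $\xi^{\otimes}(h\otimes g)=[h,g]$, $\xi^{\otimes}(\{h\})=qh$, and $\xi^{\wedge}$ is the induced map on $\mathfrak h\wedge^q\mathfrak g$. *)

theory Defs
  imports Main "HOL-Library.Poly_Mapping"
begin

record ('a, 'r) lie =
  lcarrier :: "'a set"
  ladd :: "'a \<Rightarrow> 'a \<Rightarrow> 'a"
  lzero :: "'a"
  lneg :: "'a \<Rightarrow> 'a"
  lsmult :: "'r \<Rightarrow> 'a \<Rightarrow> 'a"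
  lbr :: "'a \<Rightarrow> 'a \<Rightarrow> 'a"

definition lie_algebra :: "('a, 'r::comm_ring_1, 'm) lie_scheme \<Rightarrow> bool" where
  "lie_algebra L \<longleftrightarrow>
     (let C = lcarrier L; ad = ladd L; z = lzero L; ng = lneg L; sm = lsmult L; b = lbr L in
       z \<in> C \<and>
       (\<forall>x\<in>C. \<forall>y\<in>C. ad x y \<in> C \<and> b x y \<in> C) \<and>
       (\<forall>x\<in>C. ng x \<in> C) \<and> (\<forall>c. \<forall>x\<in>C. sm c x \<in> C) \<and>
       (\<forall>x\<in>C. \<forall>y\<in>C. \<forall>w\<in>C. ad (ad x y) w = ad x (ad y w)) \<and>
       (\<forall>x\<in>C. \<forall>y\<in>C. ad x y = ad y x) \<and>
       (\<forall>x\<in>C. ad z x = x) \<and>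
       (\<forall>x\<in>C. ad (ng x) x = z) \<and>
       (\<forall>c. \<forall>x\<in>C. \<forall>y\<in>C. sm c (ad x y) = ad (sm c x) (sm c y)) \<and>
       (\<forall>c d. \<forall>x\<in>C. sm (c + d) x = ad (sm c x) (sm d x)) \<and>
       (\<forall>c d. \<forall>x\<in>C. sm (c * d) x = sm c (sm d x)) \<and>
       (\<forall>x\<in>C. sm 1 x = x) \<and>
       (\<forall>x\<in>C. \<forall>y\<in>C. \<forall>w\<in>C. b (ad x y) w = ad (b x w) (b y w)) \<and>
       (\<forall>x\<in>C. \<forall>y\<in>C. \<forall>w\<in>C. b x (ad y w) = ad (b x y) (b x w)) \<and>
       (\<forall>c. \<forall>x\<in>C. \<forall>y\<in>C. b (sm c x) y = sm c (b x y) \<and> b x (sm c y) = sm c (b x y)) \<and>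
       (\<forall>x\<in>C. b x x = z) \<and>
       (\<forall>x\<in>C. \<forall>y\<in>C. \<forall>w\<in>C. ad (b x (b y w)) (ad (b y (b w x)) (b w (b x y))) = z))"

definition lie_ideal :: "('a, 'r::comm_ring_1, 'm) lie_scheme \<Rightarrow> 'a set \<Rightarrow> bool" where
  "lie_ideal L H \<longleftrightarrow> H \<subseteq> lcarrier L \<and> lzero L \<in> H \<and>
     (\<forall>x\<in>H. \<forall>y\<in>H. ladd L x y \<in> H) \<and> (\<forall>x\<in>H. lneg L x \<in> H) \<and>
     (\<forall>c. \<forall>x\<in>H. lsmult L c x \<in> H) \<and>
     (\<forall>g\<in>lcarrier L. \<forall>h\<in>H. lbr L g h \<in> H)"

definition lie_hom :: "('a, 'r::comm_ring_1, 'm) lie_scheme \<Rightarrow> ('b, 'r, 'n) lie_scheme \<Rightarrow> ('a \<Rightarrow> 'b) \<Rightarrow> bool" where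
  "lie_hom K L f \<longleftrightarrow> (\<forall>x\<in>lcarrier K. f x \<in> lcarrier L) \<and>
     (\<forall>x\<in>lcarrier K. \<forall>y\<in>lcarrier K. f (ladd K x y) = ladd L (f x) (f y)) \<and>
     (\<forall>c. \<forall>x\<in>lcarrier K. f (lsmult K c x) = lsmult L c (f x)) \<and>
     (\<forall>x\<in>lcarrier K. \<forall>y\<in>lcarrier K. f (lbr K x y) = lbr L (f x) (f y))"

definition lie_action :: "('a, 'r::comm_ring_1, 'm) lie_scheme \<Rightarrow> ('b, 'r, 'n) lie_scheme \<Rightarrow> ('a \<Rightarrow> 'b \<Rightarrow> 'b) \<Rightarrow> bool" where
  "lie_action G K act \<longleftrightarrow>
     (\<forall>g\<in>lcarrier G. \<forall>k\<in>lcarrier K. act g k \<in> lcarrier K) \<and>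
     (\<forall>g\<in>lcarrier G. \<forall>g'\<in>lcarrier G. \<forall>k\<in>lcarrier K. act (ladd G g g') k = ladd K (act g k) (act g' k)) \<and>
     (\<forall>g\<in>lcarrier G. \<forall>k\<in>lcarrier K. \<forall>k'\<in>lcarrier K. act g (ladd K k k') = ladd K (act g k) (act g k')) \<and>
     (\<forall>c. \<forall>g\<in>lcarrier G. \<forall>k\<in>lcarrier K. act (lsmult G c g) k = lsmult K c (act g k) \<and> act g (lsmult K c k) = lsmult K c (act g k)) \<and>
     (\<forall>g\<in>lcarrier G. \<forall>g'\<in>lcarrier G. \<forall>k\<in>lcarrier K.
        act (lbr G g g') k = ladd K (act g (act g' k)) (lneg K (act g' (act g k)))) \<and>
     (\<forall>g\<in>lcarrier G. \<forall>k\<in>lcarrier K. \<forall>k'\<in>lcarrier K.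
        act g (lbr K k k') = ladd K (lbr K (act g k) k') (lbr K k (act g k')))"

definition q_crossed_module :: "int \<Rightarrow> ('b, 'r::comm_ring_1, 'n) lie_scheme \<Rightarrow> ('a, 'r, 'm) lie_scheme \<Rightarrow> ('b \<Rightarrow> 'a) \<Rightarrow> ('a \<Rightarrow> 'b \<Rightarrow> 'b) \<Rightarrow> bool" where
  "q_crossed_module q K G \<mu> act \<longleftrightarrow>
     lie_algebra K \<and> lie_algebra G \<and> lie_hom K G \<mu> \<and> lie_action G K act \<and>
     (\<forall>g\<in>lcarrier G. \<forall>k\<in>lcarrier K. \<mu> (act g k) = lbr G g (\<mu> k)) \<and>
     (\<forall>k\<in>lcarrier K. \<forall>k'\<in>lcarrier K. act (\<mu> k) k' = lbr K k k') \<and>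
     (\<forall>k\<in>lcarrier K. \<mu> k = lzero G \<longrightarrow> lsmult K (of_int q) k = lzero K)"

text \<open>Free non-associative algebra over 'r on generators 'x: finitely supported
  'r-linear combinations of binary trees (magma words).\<close>
datatype 'x mtree = Leaf 'x | Node "'x mtree" "'x mtree"

type_synonym ('x, 'r) fm = "'x mtree \<Rightarrow>\<^sub>0 'r"

definition fm_gen :: "'x \<Rightarrow> ('x, 'r::comm_ring_1) fm" where
  "fm_gen x = Poly_Mapping.single (Leaf x) 1"

definition fm_smult :: "'r::comm_ring_1 \<Rightarrow> ('x, 'r) fm \<Rightarrow> ('x, 'r) fm" where
  "fm_smult c p = (\<Sum>t\<in>Poly_Mapping.keys p. Poly_Mapping.single t (c * Poly_Mapping.lookup p t))"

definition fm_br :: "('x, 'r::comm_ring_1) fm \<Rightarrow> ('x, 'r) fm \<Rightarrow> ('x, 'r) fm" where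
  "fm_br p p' = (\<Sum>s\<in>Poly_Mapping.keys p. \<Sum>t\<in>Poly_Mapping.keys p'.
       Poly_Mapping.single (Node s t) (Poly_Mapping.lookup p s * Poly_Mapping.lookup p' t))"

inductive_set fm_ideal :: "('x, 'r::comm_ring_1) fm set \<Rightarrow> ('x, 'r) fm set" for R where
  base: "r \<in> R \<Longrightarrow> r \<in> fm_ideal R"
| zero: "0 \<in> fm_ideal R"
| add: "a \<in> fm_ideal R \<Longrightarrow> b \<in> fm_ideal R \<Longrightarrow> a + b \<in> fm_ideal R"
| smult: "a \<in> fm_ideal R \<Longrightarrow> fm_smult c a \<in> fm_ideal R"
| brl: "a \<in> fm_ideal R \<Longrightarrow> fm_br x a \<in> fm_ideal R"
| brr: "a \<in> fm_ideal R \<Longrightarrow> fm_br a x \<in> fm_ideal R"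

definition lie_rels :: "('x, 'r::comm_ring_1) fm set" where
  "lie_rels = {fm_br a a | a. True} \<union>
     {fm_br a (fm_br b c) + fm_br b (fm_br c a) + fm_br c (fm_br a b) | a b c. True}"

definition fm_class :: "('x, 'r::comm_ring_1) fm set \<Rightarrow> ('x, 'r) fm \<Rightarrow> ('x, 'r) fm set" where
  "fm_class I x = {y. x - y \<in> I}"

definition fm_rep :: "('x, 'r::comm_ring_1) fm set \<Rightarrow> ('x, 'r) fm" where
  "fm_rep A = (SOME x. x \<in> A)"

text \<open>The Lie algebra with generators 'x and relations R (elements of the free algebra,
  each meaning "= 0"): free algebra modulo the ideal generated by R and the Lie relations.\<close>
definition presented_lie :: "('x, 'r::comm_ring_1) fm set \<Rightarrow> (('x, 'r) fm set, 'r) lie" where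
  "presented_lie R = (let I = fm_ideal (lie_rels \<union> R) in
     \<lparr> lcarrier = range (fm_class I),
       ladd = (\<lambda>A B. fm_class I (fm_rep A + fm_rep B)),
       lzero = fm_class I 0,
       lneg = (\<lambda>A. fm_class I (- fm_rep A)),
       lsmult = (\<lambda>c A. fm_class I (fm_smult c (fm_rep A))),
       lbr = (\<lambda>A B. fm_class I (fm_br (fm_rep A) (fm_rep B))) \<rparr>)"

definition presented_gen :: "('x, 'r::comm_ring_1) fm set \<Rightarrow> 'x \<Rightarrow> ('x, 'r) fm set" where
  "presented_gen R x = fm_class (fm_ideal (lie_rels \<union> R)) (fm_gen x)"

text \<open>Generator symbols: QT h g stands for h \<otimes> g, QC h stands for {h}.\<close>
datatype 'a qgen = QT 'a 'a | QC 'a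

definition qgens :: "('a, 'r, 'm) lie_scheme \<Rightarrow> 'a set \<Rightarrow> 'a qgen set" where
  "qgens G H = {QT h g | h g. h \<in> H \<and> g \<in> lcarrier G} \<union> {QC h | h. h \<in> H}"

definition qtensor_rels :: "('a, 'r::comm_ring_1, 'm) lie_scheme \<Rightarrow> 'a set \<Rightarrow> int \<Rightarrow> ('a qgen, 'r) fm set" where
  "qtensor_rels G H q = (let C = lcarrier G; pl = ladd G; sm = lsmult G; b = lbr G;
      t = (\<lambda>h g. fm_gen (QT h g) :: ('a qgen, 'r) fm); cu = (\<lambda>h. fm_gen (QC h) :: ('a qgen, 'r) fm);
      qq = (\<lambda>h. sm (of_int q) h) in
     \<comment> \<open>generators outside the admissible range are killed\<close>
     {fm_gen y | y. y \<notin> qgens G H} \<union>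
     \<comment> \<open>(1)\<close>
     {fm_smult c (t h g) - t (sm c h) g | c h g. h \<in> H \<and> g \<in> C} \<union>
     {fm_smult c (t h g) - t h (sm c g) | c h g. h \<in> H \<and> g \<in> C} \<union>
     \<comment> \<open>(2)\<close>
     {t (pl h h') g - (t h g + t h' g) | h h' g. h \<in> H \<and> h' \<in> H \<and> g \<in> C} \<union>
     \<comment> \<open>(3)\<close>
     {t h (pl g g') - (t h g + t h g') | h g g'. h \<in> H \<and> g \<in> C \<and> g' \<in> C} \<union>
     \<comment> \<open>(4)\<close>
     {t (b h h') g - (t h (b h' g) - t h' (b h g)) | h h' g. h \<in> H \<and> h' \<in> H \<and> g \<in> C} \<union>
     \<comment> \<open>(5)\<close>
     {t h (b g g') - (t (b g' h) g - t (b g h) g') | h g g'. h \<in> H \<and> g \<in> C \<and> g' \<in> C} \<union>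
     \<comment> \<open>(6)\<close>
     {fm_br (t h g) (t h' g') - t (b h g) (b h' g') | h g h' g'. h \<in> H \<and> g \<in> C \<and> h' \<in> H \<and> g' \<in> C} \<union>
     \<comment> \<open>(7)\<close>
     {fm_br (cu h') (t h g) - (t (b (qq h') h) g + t h (b (qq h') g)) | h' h g. h' \<in> H \<and> h \<in> H \<and> g \<in> C} \<union>
     \<comment> \<open>(8)\<close>
     {cu (pl (sm c h) (sm c' h')) - (fm_smult c (cu h) + fm_smult c' (cu h')) | c c' h h'. h \<in> H \<and> h' \<in> H} \<union>
     \<comment> \<open>(9)\<close>
     {fm_br (cu h) (cu h') - t (qq h) (qq h') | h h'. h \<in> H \<and> h' \<in> H} \<union>
     \<comment> \<open>(10)\<close>
     {cu (b h g) - fm_smult (of_int q) (t h g) | h g. h \<in> H \<and> g \<in> C})"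

definition qwedge_rels :: "('a, 'r::comm_ring_1, 'm) lie_scheme \<Rightarrow> 'a set \<Rightarrow> int \<Rightarrow> ('a qgen, 'r) fm set" where
  "qwedge_rels G H q = qtensor_rels G H q \<union> {fm_gen (QT h h) | h. h \<in> H}"

definition qtensor where "qtensor G H q = presented_lie (qtensor_rels G H q)"
definition qwedge where "qwedge G H q = presented_lie (qwedge_rels G H q)"
definition tens where "tens G H q h g = presented_gen (qtensor_rels G H q) (QT h g)"
definition tcurl where "tcurl G H q h = presented_gen (qtensor_rels G H q) (QC h)"
definition wedg where "wedg G H q h g = presented_gen (qwedge_rels G H q) (QT h g)"
definition wcurl where "wcurl G H q h = presented_gen (qwedge_rels G H q) (QC h)"

end

theory Submission
  imports Defs "HOL-Algebra.Ring"
begin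

text \<open>A map on generators killing
  the relations induces a Lie homomorphism; this gives \<open>\<xi>\<close>. A derivation of the free algebra
  mapping the relations into the ideal descends to the quotient; for \<open>g \<in> \<g>\<close> the derivation
  extending \<open>h \<otimes> g' \<mapsto> [g, h] \<otimes> g' + h \<otimes> [g, g']\<close> and \<open>{h} \<mapsto> {[g, h]}\<close> does, and this
  gives the action. By (6), (7) and (9) a bracket of two generators is congruent to a linear
  combination of generators, hence so is every element, and all identities of a \<open>q\<close>-crossed
  module reduce to computations on generators.\<close>

section \<open>The free non-associative algebra\<close>

abbreviation fm_word :: "'x mtree \<Rightarrow> ('x, 'r::comm_ring_1) fm" where
  "fm_word t \<equiv> Poly_Mapping.single t 1"

lemma lookup_fm_smult [simp]:
  "Poly_Mapping.lookup (fm_smult c p) u = c * Poly_Mapping.lookup p u"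
proof -
  have "Poly_Mapping.lookup (fm_smult c p) u =
        (\<Sum>t\<in>Poly_Mapping.keys p. (c * Poly_Mapping.lookup p t when t = u))"
    by (simp add: fm_smult_def lookup_sum lookup_single)
  also have "\<dots> = c * Poly_Mapping.lookup p u"
    by (cases "u \<in> Poly_Mapping.keys p") (auto simp: when_def in_keys_iff)
  finally show ?thesis .
qed

lemma lookup_fm_br_Leaf [simp]: "Poly_Mapping.lookup (fm_br p p') (Leaf x) = 0"
  by (simp add: fm_br_def lookup_sum lookup_single)

lemma lookup_fm_br_Node [simp]:
  "Poly_Mapping.lookup (fm_br p p') (Node s t) = Poly_Mapping.lookup p s * Poly_Mapping.lookup p' t"
proof -
  have "Poly_Mapping.lookup (fm_br p p') (Node s t) =
        (\<Sum>a\<in>Poly_Mapping.keys p. (Poly_Mapping.lookup p a when a = s)) *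
        (\<Sum>b\<in>Poly_Mapping.keys p'. (Poly_Mapping.lookup p' b when b = t))"
    by (simp add: fm_br_def lookup_sum lookup_single sum_product when_mult)
      (auto simp: when_def intro!: sum.cong)
  also have "\<dots> = Poly_Mapping.lookup p s * Poly_Mapping.lookup p' t"
    by (simp add: when_def in_keys_iff)
  finally show ?thesis .
qed

lemma fm_br_eqI:
  assumes "\<And>s t. Poly_Mapping.lookup a (Node s t) = Poly_Mapping.lookup (b :: ('x, 'r::comm_ring_1) fm) (Node s t)"
    and "\<And>x. Poly_Mapping.lookup a (Leaf x) = 0" "\<And>x. Poly_Mapping.lookup b (Leaf x) = 0"
  shows "a = b"
proof (rule poly_mapping_eqI)
  fix u show "Poly_Mapping.lookup a u = Poly_Mapping.lookup b u"
    using assms by (cases u) auto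
qed

lemma fm_br_add_left [simp]: "fm_br (a + b) c = fm_br a c + fm_br b c"
  by (rule fm_br_eqI) (auto simp: lookup_add algebra_simps)
lemma fm_br_add_right [simp]: "fm_br c (a + b) = fm_br c a + fm_br c b"
  by (rule fm_br_eqI) (auto simp: lookup_add algebra_simps)
lemma fm_br_smult_left [simp]: "fm_br (fm_smult k a) c = fm_smult k (fm_br a c)"
  by (rule fm_br_eqI) (auto simp: algebra_simps)
lemma fm_br_smult_right [simp]: "fm_br a (fm_smult k c) = fm_smult k (fm_br a c)"
  by (rule fm_br_eqI) (auto simp: algebra_simps)
lemma fm_br_zero_left [simp]: "fm_br 0 c = 0"
  by (rule fm_br_eqI) auto
lemma fm_br_zero_right [simp]: "fm_br c 0 = 0"
  by (rule fm_br_eqI) auto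
lemma fm_br_neg_left [simp]: "fm_br (- a) c = - fm_br a c"
  by (rule fm_br_eqI) (auto simp: lookup_minus)
lemma fm_br_neg_right [simp]: "fm_br c (- a) = - fm_br c a"
  by (rule fm_br_eqI) (auto simp: lookup_minus)
lemma fm_br_diff_left [simp]: "fm_br (a - b) c = fm_br a c - fm_br b c"
  by (rule fm_br_eqI) (auto simp: lookup_minus algebra_simps)
lemma fm_br_diff_right [simp]: "fm_br c (a - b) = fm_br c a - fm_br c b"
  by (rule fm_br_eqI) (auto simp: lookup_minus algebra_simps)

lemma fm_smult_add [simp]: "fm_smult k (a + b) = fm_smult k a + fm_smult k b"
  by (rule poly_mapping_eqI) (auto simp: lookup_add algebra_simps)
lemma fm_smult_diff [simp]: "fm_smult k (a - b) = fm_smult k a - fm_smult k b"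
  by (rule poly_mapping_eqI) (auto simp: lookup_minus algebra_simps)
lemma fm_smult_neg [simp]: "fm_smult k (- a) = - fm_smult k a"
  by (rule poly_mapping_eqI) (auto simp: lookup_minus algebra_simps)
lemma fm_smult_zero [simp]: "fm_smult k 0 = 0"
  by (rule poly_mapping_eqI) auto
lemma fm_smult_zero_left [simp]: "fm_smult 0 a = 0"
  by (rule poly_mapping_eqI) auto
lemma fm_smult_one [simp]: "fm_smult 1 a = a"
  by (rule poly_mapping_eqI) auto
lemma fm_smult_minus_one: "fm_smult (-1) a = - a"
  by (rule poly_mapping_eqI) (auto simp: lookup_minus)
lemma fm_smult_smult [simp]: "fm_smult k (fm_smult l a) = fm_smult (k * l) a"
  by (rule poly_mapping_eqI) (auto simp: algebra_simps)
lemma fm_smult_add_scalar: "fm_smult (k + l) a = fm_smult k a + fm_smult l a"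
  by (rule poly_mapping_eqI) (auto simp: lookup_add algebra_simps)

lemma fm_br_word [simp]: "fm_br (fm_word s) (fm_word t) = (fm_word (Node s t) :: ('x, 'r::comm_ring_1) fm)"
  by (rule fm_br_eqI) (auto simp: lookup_single when_def)

lemma keys_fm_smult: "Poly_Mapping.keys (fm_smult c p) \<subseteq> Poly_Mapping.keys p"
  by (auto simp: in_keys_iff)

lemma keys_fm_br:
  "Poly_Mapping.keys (fm_br a b) \<subseteq> (\<lambda>(s, t). Node s t) ` (Poly_Mapping.keys a \<times> Poly_Mapping.keys b)"
proof
  fix u assume u: "u \<in> Poly_Mapping.keys (fm_br a b)"
  then obtain s t where "u = Node s t"
    by (cases u) (auto simp: in_keys_iff)
  with u show "u \<in> (\<lambda>(s, t). Node s t) ` (Poly_Mapping.keys a \<times> Poly_Mapping.keys b)"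
    by (force simp: in_keys_iff)
qed

lemma fm_gen_eq_word: "fm_gen x = fm_word (Leaf x)"
  by (simp add: fm_gen_def)

lemma fm_word_expansion: "p = (\<Sum>t\<in>Poly_Mapping.keys p. fm_smult (Poly_Mapping.lookup p t) (fm_word t))"
proof (rule poly_mapping_eqI)
  fix u
  show "Poly_Mapping.lookup p u =
        Poly_Mapping.lookup (\<Sum>t\<in>Poly_Mapping.keys p. fm_smult (Poly_Mapping.lookup p t) (fm_word t)) u"
    by (cases "u \<in> Poly_Mapping.keys p")
      (auto simp: lookup_sum lookup_single when_def in_keys_iff if_distrib[of "(*) _"] sum.delta' cong: if_cong)
qed

section \<open>Bilinear algebras and linear extensions\<close>

text \<open>Only the additive part is meaningful; it gives access to HOL-Algebra's finite sums.\<close>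
definition additive_ring :: "('a, 'r::comm_ring_1, 'm) lie_scheme \<Rightarrow> 'a ring" where
  "additive_ring L = \<lparr>carrier = lcarrier L, mult = lbr L, one = lzero L, zero = lzero L, add = ladd L\<rparr>"

lemma additive_ring_simps [simp]:
  "carrier (additive_ring L) = lcarrier L" "add (additive_ring L) = ladd L" "zero (additive_ring L) = lzero L"
  by (simp_all add: additive_ring_def)

locale bilinear_algebra =
  fixes L :: "('a, 'r::comm_ring_1, 'm) lie_scheme"
  assumes zero_cl [simp]: "lzero L \<in> lcarrier L"
  and add_cl [simp]: "\<lbrakk>x \<in> lcarrier L; y \<in> lcarrier L\<rbrakk> \<Longrightarrow> ladd L x y \<in> lcarrier L"
  and br_cl [simp]: "\<lbrakk>x \<in> lcarrier L; y \<in> lcarrier L\<rbrakk> \<Longrightarrow> lbr L x y \<in> lcarrier L"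
  and neg_cl [simp]: "x \<in> lcarrier L \<Longrightarrow> lneg L x \<in> lcarrier L"
  and sm_cl [simp]: "x \<in> lcarrier L \<Longrightarrow> lsmult L c x \<in> lcarrier L"
  and add_assoc: "\<lbrakk>x \<in> lcarrier L; y \<in> lcarrier L; z \<in> lcarrier L\<rbrakk> \<Longrightarrow>
    ladd L (ladd L x y) z = ladd L x (ladd L y z)"
  and add_comm: "\<lbrakk>x \<in> lcarrier L; y \<in> lcarrier L\<rbrakk> \<Longrightarrow> ladd L x y = ladd L y x"
  and zero_add [simp]: "x \<in> lcarrier L \<Longrightarrow> ladd L (lzero L) x = x"
  and neg_add [simp]: "x \<in> lcarrier L \<Longrightarrow> ladd L (lneg L x) x = lzero L"
  and sm_add: "\<lbrakk>x \<in> lcarrier L; y \<in> lcarrier L\<rbrakk> \<Longrightarrow>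
    lsmult L c (ladd L x y) = ladd L (lsmult L c x) (lsmult L c y)"
  and sm_add_scalar: "x \<in> lcarrier L \<Longrightarrow> lsmult L (c + d) x = ladd L (lsmult L c x) (lsmult L d x)"
  and sm_sm: "x \<in> lcarrier L \<Longrightarrow> lsmult L (c * d) x = lsmult L c (lsmult L d x)"
  and sm_one [simp]: "x \<in> lcarrier L \<Longrightarrow> lsmult L 1 x = x"
  and br_add_left: "\<lbrakk>x \<in> lcarrier L; y \<in> lcarrier L; z \<in> lcarrier L\<rbrakk> \<Longrightarrow>
    lbr L (ladd L x y) z = ladd L (lbr L x z) (lbr L y z)"
  and br_add_right: "\<lbrakk>x \<in> lcarrier L; y \<in> lcarrier L; z \<in> lcarrier L\<rbrakk> \<Longrightarrow>
    lbr L x (ladd L y z) = ladd L (lbr L x y) (lbr L x z)"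
  and br_sm_left: "\<lbrakk>x \<in> lcarrier L; y \<in> lcarrier L\<rbrakk> \<Longrightarrow> lbr L (lsmult L c x) y = lsmult L c (lbr L x y)"
  and br_sm_right: "\<lbrakk>x \<in> lcarrier L; y \<in> lcarrier L\<rbrakk> \<Longrightarrow> lbr L x (lsmult L c y) = lsmult L c (lbr L x y)"

context bilinear_algebra
begin

lemma add_zero [simp]: "x \<in> lcarrier L \<Longrightarrow> ladd L x (lzero L) = x"
  using add_comm[of x "lzero L"] by simp

lemma add_neg [simp]: "x \<in> lcarrier L \<Longrightarrow> ladd L x (lneg L x) = lzero L"
  using add_comm[of x "lneg L x"] by simp

lemma add_left_cancel:
  assumes "x \<in> lcarrier L" "y \<in> lcarrier L" "z \<in> lcarrier L" "ladd L x y = ladd L x z"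
  shows "y = z"
proof -
  have "ladd L (lneg L x) (ladd L x y) = ladd L (lneg L x) (ladd L x z)" using assms by simp
  then show ?thesis using assms by (metis add_assoc neg_add neg_cl zero_add)
qed

lemma add_eq_self: "\<lbrakk>x \<in> lcarrier L; y \<in> lcarrier L; ladd L x y = x\<rbrakk> \<Longrightarrow> y = lzero L"
  using add_left_cancel[of x y "lzero L"] by simp

lemma neg_unique: "\<lbrakk>x \<in> lcarrier L; y \<in> lcarrier L; ladd L x y = lzero L\<rbrakk> \<Longrightarrow> y = lneg L x"
  using add_left_cancel[of x y "lneg L x"] by simp

lemma sm_zero_left [simp]: "x \<in> lcarrier L \<Longrightarrow> lsmult L 0 x = lzero L"
  using sm_add_scalar[of x 0 0] add_eq_self[of "lsmult L 0 x" "lsmult L 0 x"] by simp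

lemma sm_zero_right [simp]: "lsmult L c (lzero L) = lzero L"
  using sm_add[of "lzero L" "lzero L" c] add_eq_self[of "lsmult L c (lzero L)" "lsmult L c (lzero L)"] by simp

lemma br_zero_left [simp]: "x \<in> lcarrier L \<Longrightarrow> lbr L (lzero L) x = lzero L"
  using br_add_left[of "lzero L" "lzero L" x] add_eq_self[of "lbr L (lzero L) x" "lbr L (lzero L) x"] by simp

lemma br_zero_right [simp]: "x \<in> lcarrier L \<Longrightarrow> lbr L x (lzero L) = lzero L"
  using br_add_right[of x "lzero L" "lzero L"] add_eq_self[of "lbr L x (lzero L)" "lbr L x (lzero L)"] by simp

lemma sm_minus_one: "x \<in> lcarrier L \<Longrightarrow> lsmult L (-1) x = lneg L x"
proof -
  assume x: "x \<in> lcarrier L"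
  have "ladd L x (lsmult L (-1) x) = lzero L"
    using sm_add_scalar[of x 1 "-1"] x by simp
  then show ?thesis using neg_unique x by simp
qed

lemma neg_neg [simp]: "x \<in> lcarrier L \<Longrightarrow> lneg L (lneg L x) = x"
  using neg_unique[of "lneg L x" x] by simp

lemma neg_add_distrib:
  "\<lbrakk>x \<in> lcarrier L; y \<in> lcarrier L\<rbrakk> \<Longrightarrow> lneg L (ladd L x y) = ladd L (lneg L x) (lneg L y)"
proof -
  assume a: "x \<in> lcarrier L" "y \<in> lcarrier L"
  have "lsmult L (-1) (ladd L x y) = ladd L (lsmult L (-1) x) (lsmult L (-1) y)" using a sm_add by blast
  then show ?thesis using a by (simp add: sm_minus_one)
qed

lemma br_neg_left: "\<lbrakk>x \<in> lcarrier L; y \<in> lcarrier L\<rbrakk> \<Longrightarrow> lbr L (lneg L x) y = lneg L (lbr L x y)"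
  by (metis br_sm_left sm_minus_one br_cl)

lemma br_neg_right: "\<lbrakk>x \<in> lcarrier L; y \<in> lcarrier L\<rbrakk> \<Longrightarrow> lbr L x (lneg L y) = lneg L (lbr L x y)"
  by (metis br_sm_right sm_minus_one br_cl)

lemma add_neg_eq_zero_iff [simp]:
  assumes "x \<in> lcarrier L" "y \<in> lcarrier L"
  shows "ladd L x (lneg L y) = lzero L \<longleftrightarrow> x = y"
proof
  assume "ladd L x (lneg L y) = lzero L"
  then have "lneg L y = lneg L x"
    using assms neg_unique[of x "lneg L y"] by simp
  then show "x = y"
    using assms by (metis neg_neg)
qed (simp add: assms)

lemma abelian_group_additive_ring: "abelian_group (additive_ring L)"
proof (rule abelian_groupI)
  fix x assume "x \<in> carrier (additive_ring L)"
  then show "\<exists>y\<in>carrier (additive_ring L). y \<oplus>\<^bsub>additive_ring L\<^esub> x = \<zero>\<^bsub>additive_ring L\<^esub>"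
    by (intro bexI[of _ "lneg L x"]) auto
qed (auto simp: add_assoc intro: add_comm)

sublocale additive: abelian_group "additive_ring L" by (rule abelian_group_additive_ring)

definition lsum :: "('b \<Rightarrow> 'a) \<Rightarrow> 'b set \<Rightarrow> 'a" where
  "lsum f A = finsum (additive_ring L) f A"

lemma lsum_empty [simp]: "lsum f {} = lzero L"
  unfolding lsum_def using additive.finsum_empty by simp

lemma lsum_insert:
  "\<lbrakk>finite A; a \<notin> A; f a \<in> lcarrier L; \<forall>x\<in>A. f x \<in> lcarrier L\<rbrakk> \<Longrightarrow>
     lsum f (insert a A) = ladd L (f a) (lsum f A)"
  unfolding lsum_def using additive.finsum_insert[of A a f] by (auto simp: Pi_def)

lemma lsum_closed [simp]: "(\<And>x. x \<in> A \<Longrightarrow> f x \<in> lcarrier L) \<Longrightarrow> lsum f A \<in> lcarrier L"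
  unfolding lsum_def using additive.finsum_closed[of f A] by (auto simp: Pi_def)

lemma lsum_infinite: "infinite A \<Longrightarrow> lsum f A = lzero L"
  unfolding lsum_def using additive.finsum_infinite by simp

lemma lsum_cong:
  "\<lbrakk>A = B; \<And>x. x \<in> B \<Longrightarrow> f x = g x; \<And>x. x \<in> B \<Longrightarrow> g x \<in> lcarrier L\<rbrakk> \<Longrightarrow> lsum f A = lsum g B"
  unfolding lsum_def by (rule additive.finsum_cong) (auto simp: Pi_def)

lemma lsum_add:
  "\<lbrakk>\<And>x. x \<in> A \<Longrightarrow> f x \<in> lcarrier L; \<And>x. x \<in> A \<Longrightarrow> g x \<in> lcarrier L\<rbrakk> \<Longrightarrow>
    lsum (\<lambda>x. ladd L (f x) (g x)) A = ladd L (lsum f A) (lsum g A)"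
  unfolding lsum_def using additive.finsum_addf[of f A g] by (auto simp: Pi_def)

lemma lsum_zero: "lsum (\<lambda>x. lzero L) A = lzero L"
  unfolding lsum_def using additive.finsum_zero by simp

lemma lsum_neutral: "(\<And>x. x \<in> A \<Longrightarrow> f x = lzero L) \<Longrightarrow> lsum f A = lzero L"
  using lsum_cong[of A A f "\<lambda>x. lzero L"] lsum_zero by simp

lemma lsum_Un_disjoint:
  "\<lbrakk>finite A; finite B; A \<inter> B = {}; \<And>x. x \<in> A \<union> B \<Longrightarrow> f x \<in> lcarrier L\<rbrakk> \<Longrightarrow>
     lsum f (A \<union> B) = ladd L (lsum f A) (lsum f B)"
  unfolding lsum_def using additive.finsum_Un_disjoint[of A B f] by (auto simp: Pi_def)

lemma lsum_superset:
  assumes "finite B" "A \<subseteq> B" "\<And>x. x \<in> B - A \<Longrightarrow> f x = lzero L" "\<And>x. x \<in> B \<Longrightarrow> f x \<in> lcarrier L"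
  shows "lsum f B = lsum f A"
proof -
  have "B = A \<union> (B - A)" using assms by auto
  then have "lsum f B = ladd L (lsum f A) (lsum f (B - A))"
    using lsum_Un_disjoint[of A "B - A" f] assms finite_subset[of A B] by auto
  also have "lsum f (B - A) = lzero L" using assms by (intro lsum_neutral) auto
  moreover have "lsum f A \<in> lcarrier L" using assms by (intro lsum_closed) auto
  ultimately show ?thesis by simp
qed

lemma lsum_reindex:
  "\<lbrakk>inj_on h A; \<And>x. x \<in> h ` A \<Longrightarrow> f x \<in> lcarrier L\<rbrakk> \<Longrightarrow> lsum f (h ` A) = lsum (f \<circ> h) A"
  unfolding lsum_def using additive.finsum_reindex[of f h A] by (auto simp: Pi_def comp_def)

lemma lsum_sm:
  assumes "\<And>x. x \<in> A \<Longrightarrow> f x \<in> lcarrier L"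
  shows "lsmult L c (lsum f A) = lsum (\<lambda>x. lsmult L c (f x)) A"
  using assms
proof (induction A rule: infinite_finite_induct)
  case (infinite A) then show ?case by (simp add: lsum_infinite)
next
  case empty then show ?case by simp
next
  case (insert a A) then show ?case by (simp add: lsum_insert sm_add)
qed

lemma lsum_br_left:
  assumes "\<And>x. x \<in> A \<Longrightarrow> f x \<in> lcarrier L" "y \<in> lcarrier L"
  shows "lbr L (lsum f A) y = lsum (\<lambda>x. lbr L (f x) y) A"
  using assms
proof (induction A rule: infinite_finite_induct)
  case (infinite A) then show ?case by (simp add: lsum_infinite)
next
  case empty then show ?case by simp
next
  case (insert a A) then show ?case by (simp add: lsum_insert br_add_left)
qed

lemma lsum_br_right:
  assumes "\<And>x. x \<in> A \<Longrightarrow> f x \<in> lcarrier L" "y \<in> lcarrier L"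
  shows "lbr L y (lsum f A) = lsum (\<lambda>x. lbr L y (f x)) A"
  using assms
proof (induction A rule: infinite_finite_induct)
  case (infinite A) then show ?case by (simp add: lsum_infinite)
next
  case empty then show ?case by simp
next
  case (insert a A) then show ?case by (simp add: lsum_insert br_add_right)
qed

lemma lsum_Sigma:
  assumes "finite A" "finite B" "\<And>a b. a \<in> A \<Longrightarrow> b \<in> B \<Longrightarrow> f (a, b) \<in> lcarrier L"
  shows "lsum f (A \<times> B) = lsum (\<lambda>a. lsum (\<lambda>b. f (a, b)) B) A"
  using assms
proof (induction A rule: finite_induct)
  case empty then show ?case by simp
next
  case (insert a A)
  have eq: "insert a A \<times> B = (Pair a ` B) \<union> (A \<times> B)" by auto
  have "lsum f (insert a A \<times> B) = ladd L (lsum f (Pair a ` B)) (lsum f (A \<times> B))"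
    unfolding eq using insert by (intro lsum_Un_disjoint) auto
  also have "lsum f (Pair a ` B) = lsum (\<lambda>b. f (a, b)) B"
    using insert by (subst lsum_reindex) (auto simp: inj_on_def comp_def)
  also have "lsum f (A \<times> B) = lsum (\<lambda>a. lsum (\<lambda>b. f (a, b)) B) A"
    using insert by auto
  finally show ?case using insert by (simp add: lsum_insert)
qed

lemma lsum_in:
  assumes "\<And>x. x \<in> A \<Longrightarrow> f x \<in> S" "S \<subseteq> lcarrier L" "lzero L \<in> S"
    "\<And>x y. x \<in> S \<Longrightarrow> y \<in> S \<Longrightarrow> ladd L x y \<in> S"
  shows "lsum f A \<in> S"
  using assms(1)
proof (induction A rule: infinite_finite_induct)
  case (infinite A) then show ?case using assms by (simp add: lsum_infinite)
next
  case empty then show ?case using assms by simp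
next
  case (insert a A) then show ?case using assms by (subst lsum_insert) auto
qed

definition lin_ext :: "('x mtree \<Rightarrow> 'a) \<Rightarrow> ('x, 'r) fm \<Rightarrow> 'a" where
  "lin_ext T p = lsum (\<lambda>t. lsmult L (Poly_Mapping.lookup p t) (T t)) (Poly_Mapping.keys p)"

lemma lin_ext_closed [simp]: "(\<And>t. T t \<in> lcarrier L) \<Longrightarrow> lin_ext T p \<in> lcarrier L"
  unfolding lin_ext_def by simp

lemma lin_ext_superset:
  assumes "\<And>t. T t \<in> lcarrier L" "finite S" "Poly_Mapping.keys p \<subseteq> S"
  shows "lin_ext T p = lsum (\<lambda>t. lsmult L (Poly_Mapping.lookup p t) (T t)) S"
  unfolding lin_ext_def using assms
  by (intro lsum_superset[symmetric]) (auto simp: in_keys_iff)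

lemma lin_ext_add:
  assumes "\<And>t. T t \<in> lcarrier L"
  shows "lin_ext T (p + p') = ladd L (lin_ext T p) (lin_ext T p')"
proof -
  let ?S = "Poly_Mapping.keys p \<union> Poly_Mapping.keys p'"
  have "lin_ext T (p + p') = lsum (\<lambda>t. lsmult L (Poly_Mapping.lookup (p + p') t) (T t)) ?S"
    using assms keys_add[of p p'] by (intro lin_ext_superset) auto
  also have "\<dots> = lsum (\<lambda>t. ladd L (lsmult L (Poly_Mapping.lookup p t) (T t))
      (lsmult L (Poly_Mapping.lookup p' t) (T t))) ?S"
    using assms by (intro lsum_cong) (auto simp: lookup_add sm_add_scalar)
  also have "\<dots> = ladd L (lin_ext T p) (lin_ext T p')"
    using assms by (subst lsum_add) (auto simp: lin_ext_superset[of T ?S])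
  finally show ?thesis .
qed

lemma lin_ext_smult:
  assumes "\<And>t. T t \<in> lcarrier L"
  shows "lin_ext T (fm_smult c p) = lsmult L c (lin_ext T p)"
proof -
  have "lin_ext T (fm_smult c p) =
      lsum (\<lambda>t. lsmult L (Poly_Mapping.lookup (fm_smult c p) t) (T t)) (Poly_Mapping.keys p)"
    using assms keys_fm_smult by (intro lin_ext_superset) auto
  also have "\<dots> = lsmult L c (lin_ext T p)"
    unfolding lin_ext_def using assms by (subst lsum_sm) (auto simp: sm_sm intro: lsum_cong)
  finally show ?thesis .
qed

lemma lin_ext_zero [simp]: "lin_ext T 0 = lzero L"
  unfolding lin_ext_def by simp

lemma lin_ext_neg:
  assumes "\<And>t. T t \<in> lcarrier L"
  shows "lin_ext T (- p) = lneg L (lin_ext T p)"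
  using lin_ext_smult[where T=T, OF assms, of "-1" p] assms by (simp add: fm_smult_minus_one sm_minus_one)

lemma lin_ext_diff:
  assumes "\<And>t. T t \<in> lcarrier L"
  shows "lin_ext T (p - p') = ladd L (lin_ext T p) (lneg L (lin_ext T p'))"
  using lin_ext_add[where T=T, OF assms, of p "- p'"] lin_ext_neg[where T=T, OF assms, of p'] by simp

lemma lin_ext_word:
  assumes "\<And>t. T t \<in> lcarrier L"
  shows "lin_ext T (fm_word t) = T t"
proof -
  have "lin_ext T (fm_word t) = lsum (\<lambda>u. lsmult L (Poly_Mapping.lookup (fm_word t) u) (T u)) {t}"
    using assms by (intro lin_ext_superset) auto
  then show ?thesis
    using assms by (simp add: lsum_insert)
qed

definition lsum2 :: "('x, 'r) fm \<Rightarrow> ('x, 'r) fm \<Rightarrow> ('x mtree \<Rightarrow> 'x mtree \<Rightarrow> 'a) \<Rightarrow> 'a" where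
  "lsum2 a b F = lsum (\<lambda>s. lsum (\<lambda>t.
     lsmult L (Poly_Mapping.lookup a s * Poly_Mapping.lookup b t) (F s t)) (Poly_Mapping.keys b))
     (Poly_Mapping.keys a)"

lemma lin_ext_fm_br:
  assumes "\<And>t. T t \<in> lcarrier L"
  shows "lin_ext T (fm_br a b) = lsum2 a b (\<lambda>s t. T (Node s t))"
proof -
  let ?N = "\<lambda>(s, t). Node s t"
  let ?f = "\<lambda>u. lsmult L (Poly_Mapping.lookup (fm_br a b) u) (T u)"
  have "lin_ext T (fm_br a b) = lsum ?f (?N ` (Poly_Mapping.keys a \<times> Poly_Mapping.keys b))"
    using assms keys_fm_br[of a b] by (intro lin_ext_superset) auto
  also have "\<dots> = lsum (?f \<circ> ?N) (Poly_Mapping.keys a \<times> Poly_Mapping.keys b)"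
    using assms by (intro lsum_reindex) (auto simp: inj_on_def)
  also have "\<dots> = lsum2 a b (\<lambda>s t. T (Node s t))"
    unfolding lsum2_def using assms by (subst lsum_Sigma) (auto simp: comp_def)
  finally show ?thesis .
qed

lemma lsum2_add:
  assumes "\<And>s t. F s t \<in> lcarrier L" "\<And>s t. F' s t \<in> lcarrier L"
  shows "lsum2 a b (\<lambda>s t. ladd L (F s t) (F' s t)) = ladd L (lsum2 a b F) (lsum2 a b F')"
  unfolding lsum2_def using assms
  by (subst lsum_add[symmetric]) (auto simp: sm_add lsum_add intro!: lsum_cong)

lemma lsum2_br:
  assumes "\<And>t. X t \<in> lcarrier L" "\<And>t. Y t \<in> lcarrier L"
  shows "lsum2 a b (\<lambda>s t. lbr L (X s) (Y t)) = lbr L (lin_ext X a) (lin_ext Y b)"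
proof -
  have "lbr L (lin_ext X a) (lin_ext Y b) =
      lsum (\<lambda>s. lbr L (lsmult L (Poly_Mapping.lookup a s) (X s)) (lin_ext Y b)) (Poly_Mapping.keys a)"
    unfolding lin_ext_def[of X] using assms by (subst lsum_br_left) auto
  also have "\<dots> = lsum2 a b (\<lambda>s t. lbr L (X s) (Y t))"
    unfolding lsum2_def
  proof (rule lsum_cong[OF refl])
    fix s
    show "lbr L (lsmult L (Poly_Mapping.lookup a s) (X s)) (lin_ext Y b) =
        lsum (\<lambda>t. lsmult L (Poly_Mapping.lookup a s * Poly_Mapping.lookup b t) (lbr L (X s) (Y t)))
          (Poly_Mapping.keys b)"
      unfolding lin_ext_def[of Y] using assms
      by (subst lsum_br_right)
        (auto intro!: lsum_cong simp: br_sm_left br_sm_right sm_sm[symmetric] mult.commute)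
  qed (use assms in auto)
  finally show ?thesis by simp
qed

lemma lin_ext_br_hom:
  assumes "\<And>t. T t \<in> lcarrier L" "\<And>s t. T (Node s t) = lbr L (T s) (T t)"
  shows "lin_ext T (fm_br a b) = lbr L (lin_ext T a) (lin_ext T b)"
  using assms by (simp add: lin_ext_fm_br lsum2_br)

lemma lin_ext_br_der:
  assumes "\<And>t. T t \<in> lcarrier L" "\<And>t. U t \<in> lcarrier L"
    and "\<And>s t. T (Node s t) = ladd L (lbr L (T s) (U t)) (lbr L (U s) (T t))"
  shows "lin_ext T (fm_br a b) = ladd L (lbr L (lin_ext T a) (lin_ext U b)) (lbr L (lin_ext U a) (lin_ext T b))"
  using assms by (simp add: lin_ext_fm_br lsum2_add lsum2_br)

end

fun word_eval :: "('a, 'r::comm_ring_1, 'm) lie_scheme \<Rightarrow> ('x \<Rightarrow> 'a) \<Rightarrow> 'x mtree \<Rightarrow> 'a" where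
  "word_eval L f (Leaf x) = f x"
| "word_eval L f (Node s t) = lbr L (word_eval L f s) (word_eval L f t)"

lemma (in bilinear_algebra) word_eval_closed: "(\<And>x. f x \<in> lcarrier L) \<Longrightarrow> word_eval L f t \<in> lcarrier L"
  by (induction t) auto

section \<open>Lie algebras\<close>

locale lie_alg = bilinear_algebra +
  assumes br_self: "x \<in> lcarrier L \<Longrightarrow> lbr L x x = lzero L"
  and jacobi: "\<lbrakk>x \<in> lcarrier L; y \<in> lcarrier L; w \<in> lcarrier L\<rbrakk> \<Longrightarrow>
   ladd L (lbr L x (lbr L y w)) (ladd L (lbr L y (lbr L w x)) (lbr L w (lbr L x y))) = lzero L"

lemma lie_algebra_lie_alg: "lie_algebra L \<Longrightarrow> lie_alg L"
  unfolding lie_algebra_def Let_def by (intro lie_alg.intro lie_alg_axioms.intro bilinear_algebra.intro) auto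

context lie_alg
begin

lemma br_anticomm: "\<lbrakk>x \<in> lcarrier L; y \<in> lcarrier L\<rbrakk> \<Longrightarrow> lbr L y x = lneg L (lbr L x y)"
proof -
  assume a: "x \<in> lcarrier L" "y \<in> lcarrier L"
  have "lzero L = lbr L (ladd L x y) (ladd L x y)" using a br_self by simp
  also have "\<dots> = ladd L (ladd L (lbr L x x) (lbr L y x)) (ladd L (lbr L x y) (lbr L y y))"
    using a by (simp add: br_add_left br_add_right)
  also have "\<dots> = ladd L (lbr L x y) (lbr L y x)"
    using a by (simp add: br_self add_comm)
  finally show ?thesis using a neg_unique by simp
qed

lemma eq_neg_of_add_eq_zero: "\<lbrakk>x \<in> lcarrier L; y \<in> lcarrier L; ladd L x y = lzero L\<rbrakk> \<Longrightarrow> x = lneg L y"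
  using neg_unique[of y x] by (simp add: add_comm)

lemma br_leibniz: "\<lbrakk>x \<in> lcarrier L; y \<in> lcarrier L; z \<in> lcarrier L\<rbrakk> \<Longrightarrow>
  lbr L x (lbr L y z) = ladd L (lbr L (lbr L x y) z) (lbr L y (lbr L x z))"
proof -
  assume a: "x \<in> lcarrier L" "y \<in> lcarrier L" "z \<in> lcarrier L"
  have "lbr L x (lbr L y z) = lneg L (ladd L (lbr L y (lbr L z x)) (lbr L z (lbr L x y)))"
    using jacobi[OF a] a by (intro eq_neg_of_add_eq_zero) auto
  also have "\<dots> = ladd L (lneg L (lbr L y (lbr L z x))) (lneg L (lbr L z (lbr L x y)))"
    using a by (simp add: neg_add_distrib)
  also have "lneg L (lbr L y (lbr L z x)) = lbr L y (lbr L x z)"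
    using a by (simp add: br_anticomm[of x z] br_neg_right)
  also have "lneg L (lbr L z (lbr L x y)) = lbr L (lbr L x y) z"
    using a by (simp add: br_anticomm[of "lbr L x y" z])
  finally show ?thesis using a by (simp add: add_comm)
qed

lemma br_br_left: "\<lbrakk>x \<in> lcarrier L; y \<in> lcarrier L; z \<in> lcarrier L\<rbrakk> \<Longrightarrow>
  lbr L (lbr L x y) z = ladd L (lbr L x (lbr L y z)) (lneg L (lbr L y (lbr L x z)))"
  using br_leibniz[of x y z] by (simp add: add_assoc)

lemma br_br_right: "\<lbrakk>h \<in> lcarrier L; g \<in> lcarrier L; g' \<in> lcarrier L\<rbrakk> \<Longrightarrow>
  lbr L h (lbr L g g') = ladd L (lbr L (lbr L g' h) g) (lneg L (lbr L (lbr L g h) g'))"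
proof -
  assume a: "h \<in> lcarrier L" "g \<in> lcarrier L" "g' \<in> lcarrier L"
  have "lbr L h (lbr L g g') = ladd L (lbr L (lbr L h g) g') (lbr L g (lbr L h g'))"
    using a by (rule br_leibniz)
  also have "lbr L (lbr L h g) g' = lneg L (lbr L (lbr L g h) g')"
    using a by (simp add: br_anticomm[of g h] br_neg_left)
  also have "lbr L g (lbr L h g') = lbr L (lbr L g' h) g"
  proof -
    have "lbr L g (lbr L h g') = lbr L g (lneg L (lbr L g' h))" using a by (simp add: br_anticomm[of g' h])
    also have "\<dots> = lneg L (lbr L g (lbr L g' h))" using a by (simp add: br_neg_right)
    also have "lbr L g (lbr L g' h) = lneg L (lbr L (lbr L g' h) g)"
      using a by (simp add: br_anticomm[of "lbr L g' h" g])
    finally show ?thesis using a by simp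
  qed
  finally show ?thesis using a by (simp add: add_comm)
qed

end

section \<open>Derivations of the free algebra\<close>

definition fm_alg :: "(('x, 'r::comm_ring_1) fm, 'r) lie" where
  "fm_alg = \<lparr>lcarrier = UNIV, ladd = (+), lzero = 0, lneg = uminus, lsmult = fm_smult, lbr = fm_br\<rparr>"

lemma fm_alg_simps [simp]: "lcarrier fm_alg = UNIV" "ladd fm_alg = (+)" "lzero fm_alg = 0" "lneg fm_alg = uminus"
  "lsmult fm_alg = fm_smult" "lbr fm_alg = fm_br"
  by (simp_all add: fm_alg_def)

interpretation free: bilinear_algebra "fm_alg :: (('x, 'r::comm_ring_1) fm, 'r) lie"
  by unfold_locales (auto simp: add.assoc add.commute fm_smult_add_scalar)

lemma fm_alg_lsum: "free.lsum f A = sum f A"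
  by (induction A rule: infinite_finite_induct) (auto simp: free.lsum_infinite free.lsum_insert)

lemma fm_alg_lin_ext_word: "free.lin_ext fm_word p = p"
  unfolding free.lin_ext_def fm_alg_lsum fm_alg_simps by (rule fm_word_expansion[symmetric])

fun der_word :: "('x \<Rightarrow> ('x, 'r::comm_ring_1) fm) \<Rightarrow> 'x mtree \<Rightarrow> ('x, 'r) fm" where
  "der_word d (Leaf x) = d x"
| "der_word d (Node s t) = fm_br (der_word d s) (fm_word t) + fm_br (fm_word s) (der_word d t)"

definition fm_der :: "('x \<Rightarrow> ('x, 'r::comm_ring_1) fm) \<Rightarrow> ('x, 'r) fm \<Rightarrow> ('x, 'r) fm" where
  "fm_der d p = free.lin_ext (der_word d) p"

lemma fm_der_add [simp]: "fm_der d (a + b) = fm_der d a + fm_der d b"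
  unfolding fm_der_def by (simp add: free.lin_ext_add)
lemma fm_der_smult [simp]: "fm_der d (fm_smult c a) = fm_smult c (fm_der d a)"
  unfolding fm_der_def by (simp add: free.lin_ext_smult)
lemma fm_der_diff [simp]: "fm_der d (a - b) = fm_der d a - fm_der d b"
  unfolding fm_der_def by (simp add: free.lin_ext_diff)
lemma fm_der_zero [simp]: "fm_der d 0 = 0"
  unfolding fm_der_def by simp
lemma fm_der_gen [simp]: "fm_der d (fm_gen x) = d x"
  unfolding fm_der_def fm_gen_eq_word by (simp add: free.lin_ext_word)
lemma fm_der_br [simp]: "fm_der d (fm_br a b) = fm_br (fm_der d a) b + fm_br a (fm_der d b)"
  using free.lin_ext_br_der[of "der_word d" fm_word a b]
  by (simp add: fm_der_def fm_alg_lin_ext_word)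

section \<open>Presented Lie algebras\<close>

abbreviation rel_ideal :: "('x, 'r::comm_ring_1) fm set \<Rightarrow> ('x, 'r) fm set" where
  "rel_ideal R \<equiv> fm_ideal (lie_rels \<union> R)"

abbreviation rel_class :: "('x, 'r::comm_ring_1) fm set \<Rightarrow> ('x, 'r) fm \<Rightarrow> ('x, 'r) fm set" where
  "rel_class R \<equiv> fm_class (rel_ideal R)"

lemma rel_ideal_neg: "a \<in> rel_ideal R \<Longrightarrow> - a \<in> rel_ideal R"
  using fm_ideal.smult[of a "lie_rels \<union> R" "-1"] by (simp add: fm_smult_minus_one)

lemma rel_ideal_diff: "a \<in> rel_ideal R \<Longrightarrow> b \<in> rel_ideal R \<Longrightarrow> a - b \<in> rel_ideal R"
  using fm_ideal.add[OF _ rel_ideal_neg] by (metis diff_conv_add_uminus)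

lemma rel_ideal_add: "a \<in> rel_ideal R \<Longrightarrow> b \<in> rel_ideal R \<Longrightarrow> a + b \<in> rel_ideal R"
  by (rule fm_ideal.add)

lemma rel_ideal_smult: "a \<in> rel_ideal R \<Longrightarrow> fm_smult c a \<in> rel_ideal R"
  by (rule fm_ideal.smult)

lemma rel_ideal_br_left: "a \<in> rel_ideal R \<Longrightarrow> fm_br x a \<in> rel_ideal R"
  by (rule fm_ideal.brl)

lemma rel_ideal_br_right: "a \<in> rel_ideal R \<Longrightarrow> fm_br a x \<in> rel_ideal R"
  by (rule fm_ideal.brr)

lemma rel_ideal_zero: "0 \<in> rel_ideal R"
  by (rule fm_ideal.zero)

lemma rel_ideal_rel: "r \<in> R \<Longrightarrow> r \<in> rel_ideal R"
  by (rule fm_ideal.base) simp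

lemma rel_ideal_br_self: "fm_br a a \<in> rel_ideal R"
  by (rule fm_ideal.base) (auto simp: lie_rels_def)

lemma rel_ideal_jacobi: "fm_br a (fm_br b c) + fm_br b (fm_br c a) + fm_br c (fm_br a b) \<in> rel_ideal R"
  by (rule fm_ideal.base) (auto simp: lie_rels_def)

lemma rel_ideal_br_anticomm: "fm_br a b + fm_br b a \<in> rel_ideal R"
proof -
  have "fm_br (a + b) (a + b) - fm_br a a - fm_br b b \<in> rel_ideal R"
    by (intro rel_ideal_diff rel_ideal_br_self)
  then show ?thesis by (simp add: algebra_simps)
qed

lemma rel_class_eq_iff: "rel_class R a = rel_class R b \<longleftrightarrow> a - b \<in> rel_ideal R"
proof
  assume eq: "rel_class R a = rel_class R b"
  have "b \<in> rel_class R b" by (simp add: fm_class_def rel_ideal_zero)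
  then have "b \<in> rel_class R a" using eq by simp
  then show "a - b \<in> rel_ideal R" by (simp add: fm_class_def)
next
  assume h: "a - b \<in> rel_ideal R"
  have "a - y \<in> rel_ideal R \<longleftrightarrow> b - y \<in> rel_ideal R" for y
  proof
    assume "a - y \<in> rel_ideal R"
    moreover have "b - y = (a - y) - (a - b)" by simp
    ultimately show "b - y \<in> rel_ideal R" using rel_ideal_diff h by metis
  next
    assume "b - y \<in> rel_ideal R"
    moreover have "a - y = (a - b) + (b - y)" by simp
    ultimately show "a - y \<in> rel_ideal R" using rel_ideal_add h by metis
  qed
  then show "rel_class R a = rel_class R b" by (simp add: fm_class_def)
qed

lemma fm_rep_rel_class: "a - fm_rep (rel_class R a) \<in> rel_ideal R"
proof -
  have "a \<in> rel_class R a" by (simp add: fm_class_def rel_ideal_zero)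
  then have "fm_rep (rel_class R a) \<in> rel_class R a" unfolding fm_rep_def by (rule someI)
  then show ?thesis by (simp add: fm_class_def)
qed

lemma rel_class_fm_rep [simp]: "rel_class R (fm_rep (rel_class R a)) = rel_class R a"
  using fm_rep_rel_class[of a R] rel_class_eq_iff[of R a "fm_rep (rel_class R a)"] by simp

lemma rel_class_eqI: "a - b \<in> rel_ideal R \<Longrightarrow> rel_class R a = rel_class R b"
  by (simp add: rel_class_eq_iff)

lemma presented_lie_carrier: "lcarrier (presented_lie R) = range (rel_class R)"
  by (simp add: presented_lie_def Let_def)

lemma rel_class_in_presented_lie [simp]: "rel_class R a \<in> lcarrier (presented_lie R)"
  by (simp add: presented_lie_carrier)

lemma presented_lie_add [simp]:
  "ladd (presented_lie R) (rel_class R a) (rel_class R b) = rel_class R (a + b)"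
proof -
  have "fm_rep (rel_class R a) + fm_rep (rel_class R b) - (a + b) =
      - ((a - fm_rep (rel_class R a)) + (b - fm_rep (rel_class R b)))"
    by (simp add: algebra_simps)
  also have "\<dots> \<in> rel_ideal R"
    by (intro rel_ideal_neg rel_ideal_add fm_rep_rel_class)
  finally show ?thesis
    by (simp add: presented_lie_def Let_def rel_class_eq_iff)
qed

lemma presented_lie_zero [simp]: "lzero (presented_lie R) = rel_class R 0"
  by (simp add: presented_lie_def Let_def)

lemma presented_lie_neg [simp]: "lneg (presented_lie R) (rel_class R a) = rel_class R (- a)"
proof -
  have "- fm_rep (rel_class R a) - (- a) \<in> rel_ideal R"
    using fm_rep_rel_class[of a R] by simp
  then show ?thesis by (simp add: presented_lie_def Let_def rel_class_eq_iff)
qed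

lemma presented_lie_smult [simp]: "lsmult (presented_lie R) c (rel_class R a) = rel_class R (fm_smult c a)"
proof -
  have "fm_smult c (fm_rep (rel_class R a)) - fm_smult c a \<in> rel_ideal R"
    using rel_ideal_neg[OF rel_ideal_smult[OF fm_rep_rel_class[of a R], of c]] by simp
  then show ?thesis by (simp add: presented_lie_def Let_def rel_class_eq_iff)
qed

lemma presented_lie_br [simp]:
  "lbr (presented_lie R) (rel_class R a) (rel_class R b) = rel_class R (fm_br a b)"
proof -
  have "fm_br (fm_rep (rel_class R a)) (fm_rep (rel_class R b)) - fm_br a b =
      - (fm_br (a - fm_rep (rel_class R a)) (fm_rep (rel_class R b))
        + fm_br a (b - fm_rep (rel_class R b)))"
    by (simp add: algebra_simps)
  moreover have "\<dots> \<in> rel_ideal R"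
    by (intro rel_ideal_neg rel_ideal_add rel_ideal_br_right rel_ideal_br_left fm_rep_rel_class)
  ultimately show ?thesis by (simp add: presented_lie_def Let_def rel_class_eq_iff)
qed

lemma ball_presented_lie: "(\<forall>A\<in>lcarrier (presented_lie R). P A) \<longleftrightarrow> (\<forall>a. P (rel_class R a))"
  by (auto simp: presented_lie_carrier)

lemma lie_algebra_presented_lie: "lie_algebra (presented_lie R)"
proof -
  have jac: "\<And>a b c. fm_br a (fm_br b c) + (fm_br b (fm_br c a) + fm_br c (fm_br a b)) \<in> rel_ideal R"
    using rel_ideal_jacobi by (simp add: add.assoc)
  show ?thesis
    unfolding lie_algebra_def Let_def ball_presented_lie
    by (simp add: rel_class_eq_iff algebra_simps fm_smult_add_scalar rel_ideal_br_self rel_ideal_zero)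
      (use jac in blast)
qed

context lie_alg
begin

lemma lin_ext_word_eval_br:
  assumes "\<And>x. f x \<in> lcarrier L"
  shows "lin_ext (word_eval L f) (fm_br a b) = lbr L (lin_ext (word_eval L f) a) (lin_ext (word_eval L f) b)"
  by (rule lin_ext_br_hom) (simp_all add: assms word_eval_closed)

context
  fixes f R
  assumes f_closed: "\<And>x. f x \<in> lcarrier L"
    and f_kills_rels: "\<And>r. r \<in> R \<Longrightarrow> lin_ext (word_eval L f) r = lzero L"
begin

lemma lin_ext_word_eval_rel_ideal: "a \<in> rel_ideal R \<Longrightarrow> lin_ext (word_eval L f) a = lzero L"
proof (induction a rule: fm_ideal.induct)
  case (base r)
  then consider "r \<in> R" | a where "r = fm_br a a"
    | a b c where "r = fm_br a (fm_br b c) + fm_br b (fm_br c a) + fm_br c (fm_br a b)"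
    unfolding lie_rels_def by blast
  then show ?case
  proof cases
    case 1
    then show ?thesis by (rule f_kills_rels)
  next
    case 2
    then show ?thesis by (simp add: lin_ext_word_eval_br f_closed word_eval_closed br_self)
  next
    case 3
    then show ?thesis
      by (simp add: lin_ext_word_eval_br lin_ext_add f_closed word_eval_closed jacobi add_assoc)
  qed
qed (simp_all add: lin_ext_word_eval_br lin_ext_add lin_ext_smult f_closed word_eval_closed)

lemma lin_ext_word_eval_fm_rep:
  "lin_ext (word_eval L f) (fm_rep (rel_class R p)) = lin_ext (word_eval L f) p"
proof -
  have "lin_ext (word_eval L f) (p - fm_rep (rel_class R p)) = lzero L"
    by (rule lin_ext_word_eval_rel_ideal[OF fm_rep_rel_class])
  then show ?thesis
    by (simp add: lin_ext_diff f_closed word_eval_closed)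
qed

lemma lie_hom_presented_lie: "lie_hom (presented_lie R) L (\<lambda>A. lin_ext (word_eval L f) (fm_rep A))"
  unfolding lie_hom_def
  by (auto simp: presented_lie_carrier lin_ext_word_eval_fm_rep lin_ext_word_eval_br
      lin_ext_add lin_ext_smult f_closed word_eval_closed)

end

end

lemma fm_der_rel_ideal:
  assumes der_rels: "\<And>r. r \<in> R \<Longrightarrow> fm_der d r \<in> rel_ideal R"
  shows "a \<in> rel_ideal R \<Longrightarrow> fm_der d a \<in> rel_ideal R"
proof (induction a rule: fm_ideal.induct)
  case (base r)
  then consider "r \<in> R" | a where "r = fm_br a a"
    | a b c where "r = fm_br a (fm_br b c) + fm_br b (fm_br c a) + fm_br c (fm_br a b)"
    unfolding lie_rels_def by blast
  then show ?case
  proof cases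
    case 1 then show ?thesis by (rule der_rels)
  next
    case (2 a) then show ?thesis by (simp add: rel_ideal_br_anticomm)
  next
    case (3 a b c)
    let ?J = "\<lambda>a b c. fm_br a (fm_br b c) + fm_br b (fm_br c a) + fm_br c (fm_br a b)"
    have "fm_der d r = ?J (fm_der d a) b c + ?J a (fm_der d b) c + ?J a b (fm_der d c)"
      using 3 by (simp add: algebra_simps)
    then show ?thesis by (simp add: rel_ideal_add rel_ideal_jacobi)
  qed
next
  case zero then show ?case by (simp add: rel_ideal_zero)
next
  case (add a b) then show ?case by (simp add: rel_ideal_add)
next
  case (smult a c) then show ?case by (simp add: rel_ideal_smult)
next
  case (brl a x) then show ?case by (simp add: rel_ideal_add rel_ideal_br_left rel_ideal_br_right)
next
  case (brr a x) then show ?case by (simp add: rel_ideal_add rel_ideal_br_left rel_ideal_br_right)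
qed

lemma rel_class_fm_der_fm_rep:
  assumes der_rels: "\<And>r. r \<in> R \<Longrightarrow> fm_der d r \<in> rel_ideal R"
  shows "rel_class R (fm_der d (fm_rep (rel_class R p))) = rel_class R (fm_der d p)"
proof -
  have "fm_der d (p - fm_rep (rel_class R p)) \<in> rel_ideal R"
    by (rule fm_der_rel_ideal[OF der_rels fm_rep_rel_class])
  then have "fm_der d p - fm_der d (fm_rep (rel_class R p)) \<in> rel_ideal R" by simp
  then show ?thesis by (intro rel_class_eqI) (metis rel_ideal_neg minus_diff_eq)
qed

section \<open>Spanning by generators\<close>

inductive_set gen_span :: "('x, 'r::comm_ring_1) fm set" where
  zero: "0 \<in> gen_span"
| gen: "fm_gen x \<in> gen_span"
| add: "a \<in> gen_span \<Longrightarrow> b \<in> gen_span \<Longrightarrow> a + b \<in> gen_span"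
| smult: "a \<in> gen_span \<Longrightarrow> fm_smult c a \<in> gen_span"

definition gen_brackets_spanned :: "('x, 'r::comm_ring_1) fm set \<Rightarrow> bool" where
  "gen_brackets_spanned R \<longleftrightarrow> (\<forall>x y. \<exists>s\<in>gen_span. fm_br (fm_gen x) (fm_gen y) - s \<in> rel_ideal R)"

lemma gen_span_br_gen:
  assumes spanned: "gen_brackets_spanned R" and b: "b \<in> gen_span"
  shows "\<exists>s\<in>gen_span. fm_br (fm_gen x) b - s \<in> rel_ideal R"
  using b
proof (induction b rule: gen_span.induct)
  case zero then show ?case by (intro bexI[of _ 0]) (auto intro: gen_span.intros rel_ideal_zero)
next
  case (gen y) then show ?case using spanned by (auto simp: gen_brackets_spanned_def)
next
  case (add a b)
  then obtain s1 s2 where "s1 \<in> gen_span" "s2 \<in> gen_span"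
    and "fm_br (fm_gen x) a - s1 \<in> rel_ideal R" "fm_br (fm_gen x) b - s2 \<in> rel_ideal R"
    by blast
  then show ?case
    by (intro bexI[of _ "s1 + s2"]) (auto intro: gen_span.intros dest: rel_ideal_add simp: algebra_simps)
next
  case (smult a c)
  then obtain s1 where "s1 \<in> gen_span" "fm_br (fm_gen x) a - s1 \<in> rel_ideal R" by blast
  then show ?case
    by (intro bexI[of _ "fm_smult c s1"]) (auto intro: gen_span.intros dest: rel_ideal_smult[where c=c])
qed

lemma gen_span_br:
  assumes spanned: "gen_brackets_spanned R" and a: "a \<in> gen_span" and b: "b \<in> gen_span"
  shows "\<exists>s\<in>gen_span. fm_br a b - s \<in> rel_ideal R"
  using a
proof (induction a rule: gen_span.induct)
  case zero then show ?case by (intro bexI[of _ 0]) (auto intro: gen_span.intros rel_ideal_zero)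
next
  case (gen y) then show ?case using gen_span_br_gen[OF spanned b] by blast
next
  case (add a1 a2)
  then obtain s1 s2 where "s1 \<in> gen_span" "s2 \<in> gen_span"
    and "fm_br a1 b - s1 \<in> rel_ideal R" "fm_br a2 b - s2 \<in> rel_ideal R"
    by blast
  then show ?case
    by (intro bexI[of _ "s1 + s2"]) (auto intro: gen_span.intros dest: rel_ideal_add simp: algebra_simps)
next
  case (smult a c)
  then obtain s1 where "s1 \<in> gen_span" "fm_br a b - s1 \<in> rel_ideal R" by blast
  then show ?case
    by (intro bexI[of _ "fm_smult c s1"]) (auto intro: gen_span.intros dest: rel_ideal_smult[where c=c])
qed

lemma word_congruent_gen_span:
  assumes spanned: "gen_brackets_spanned R"
  shows "\<exists>s\<in>gen_span. fm_word t - s \<in> rel_ideal R"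
proof (induction t)
  case (Leaf x) then show ?case
    using gen_span.gen[of x] by (intro bexI[of _ "fm_gen x"]) (auto simp: fm_gen_eq_word rel_ideal_zero)
next
  case (Node t1 t2)
  then obtain a b where ab: "a \<in> gen_span" "b \<in> gen_span"
    "fm_word t1 - a \<in> rel_ideal R" "fm_word t2 - b \<in> rel_ideal R"
    by blast
  obtain s where s: "s \<in> gen_span" "fm_br a b - s \<in> rel_ideal R" using gen_span_br[OF spanned ab(1,2)] by blast
  have tn: "fm_word (Node t1 t2) = fm_br (fm_word t1) (fm_word t2)" by simp
  have "fm_word (Node t1 t2) - s = fm_br (fm_word t1 - a) (fm_word t2) + fm_br a (fm_word t2 - b) + (fm_br a b - s)"
    unfolding tn by (simp del: fm_br_word add: algebra_simps)
  also have "\<dots> \<in> rel_ideal R"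
    using ab s by (intro rel_ideal_add rel_ideal_br_left rel_ideal_br_right)
  finally show ?case using s by blast
qed

lemma sum_words_congruent_gen_span:
  assumes spanned: "gen_brackets_spanned R"
  shows "finite A \<Longrightarrow> \<exists>s\<in>gen_span. (\<Sum>t\<in>A. fm_smult (c t) (fm_word t)) - s \<in> rel_ideal R"
proof (induction A rule: finite_induct)
  case empty then show ?case by (intro bexI[of _ 0]) (auto intro: gen_span.intros rel_ideal_zero)
next
  case (insert a A)
  then obtain s1 where s1: "s1 \<in> gen_span" "(\<Sum>t\<in>A. fm_smult (c t) (fm_word t)) - s1 \<in> rel_ideal R" by blast
  obtain s2 where s2: "s2 \<in> gen_span" "fm_word a - s2 \<in> rel_ideal R" using word_congruent_gen_span[OF spanned] by blast
  have "(\<Sum>t\<in>insert a A. fm_smult (c t) (fm_word t)) - (fm_smult (c a) s2 + s1) =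
        fm_smult (c a) (fm_word a - s2) + ((\<Sum>t\<in>A. fm_smult (c t) (fm_word t)) - s1)"
    using insert by (simp add: algebra_simps)
  also have "\<dots> \<in> rel_ideal R" using s1 s2 by (intro rel_ideal_add rel_ideal_smult)
  finally show ?case using s1 s2 by (blast intro: gen_span.intros)
qed

lemma congruent_gen_span:
  assumes spanned: "gen_brackets_spanned R"
  shows "\<exists>s\<in>gen_span. p - s \<in> rel_ideal R"
  using sum_words_congruent_gen_span[OF spanned, of "Poly_Mapping.keys p" "Poly_Mapping.lookup p"] fm_word_expansion[of p] by simp

lemma gen_span_induct_mod:
  assumes spanned: "gen_brackets_spanned R"
    and resp: "\<And>a b. a - b \<in> rel_ideal R \<Longrightarrow> Q a \<Longrightarrow> Q b"
    and Q0: "Q 0" and Qadd: "\<And>a b. Q a \<Longrightarrow> Q b \<Longrightarrow> Q (a + b)"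
    and Qsm: "\<And>c a. Q a \<Longrightarrow> Q (fm_smult c a)" and Qgen: "\<And>x. Q (fm_gen x)"
  shows "Q p"
proof -
  obtain s where s: "s \<in> gen_span" "p - s \<in> rel_ideal R" using congruent_gen_span[OF spanned] by blast
  have "Q s" using s(1) by (induction s rule: gen_span.induct) (auto intro: Q0 Qadd Qsm Qgen)
  moreover have "s - p \<in> rel_ideal R" using rel_ideal_neg[OF s(2)] by simp
  ultimately show ?thesis by (rule resp[rotated])
qed

lemma linear_into_rel_ideal:
  assumes spanned: "gen_brackets_spanned R"
    and add: "\<And>a b. \<Phi> (a + b) = \<Phi> a + \<Phi> b" and sm: "\<And>c a. \<Phi> (fm_smult c a) = fm_smult c (\<Phi> a)"
    and pres: "\<And>a. a \<in> rel_ideal R \<Longrightarrow> \<Phi> a \<in> rel_ideal R" and gen: "\<And>x. \<Phi> (fm_gen x) \<in> rel_ideal R"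
  shows "\<Phi> p \<in> rel_ideal R"
proof (rule gen_span_induct_mod[OF spanned, where Q="\<lambda>p. \<Phi> p \<in> rel_ideal R"])
  fix a b assume ab: "a - b \<in> rel_ideal R" and pa: "\<Phi> a \<in> rel_ideal R"
  have e: "\<Phi> a = \<Phi> (a - b) + \<Phi> b" using add[of "a - b" b] by simp
  have "\<Phi> a - \<Phi> (a - b) \<in> rel_ideal R" using rel_ideal_diff[OF pa pres[OF ab]] .
  then show "\<Phi> b \<in> rel_ideal R" using e by simp
next
  show "\<Phi> 0 \<in> rel_ideal R" using sm[of 0 0] rel_ideal_zero by simp
next
  fix a b assume "\<Phi> a \<in> rel_ideal R" "\<Phi> b \<in> rel_ideal R"
  then show "\<Phi> (a + b) \<in> rel_ideal R"
    unfolding add by (rule rel_ideal_add)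
next
  fix c a assume "\<Phi> a \<in> rel_ideal R"
  then show "\<Phi> (fm_smult c a) \<in> rel_ideal R"
    unfolding sm by (rule rel_ideal_smult)
qed (rule gen)

section \<open>The presentation of the q-tensor and q-exterior products\<close>

locale qtensor_pres =
  fixes G :: "('a, 'r::comm_ring_1) lie" and H :: "'a set" and q :: int and E :: "('a qgen, 'r) fm set"
  assumes lie_G: "lie_algebra G" and ideal_H: "lie_ideal G H"
  and extra_rels: "E = {} \<or> E = {fm_gen (QT h h) | h. h \<in> H}"
    \<comment> \<open>\<open>E = {}\<close> presents the \<open>q\<close>-tensor product, the other choice the \<open>q\<close>-exterior product\<close>
begin

sublocale g: lie_alg G by (rule lie_algebra_lie_alg[OF lie_G])

abbreviation "C \<equiv> lcarrier G"
abbreviation "rels \<equiv> qtensor_rels G H q \<union> E"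
abbreviation I where "I \<equiv> rel_ideal rels"
abbreviation tg :: "'a \<Rightarrow> 'a \<Rightarrow> ('a qgen, 'r) fm" where "tg h g \<equiv> fm_gen (QT h g)"
abbreviation cg :: "'a \<Rightarrow> ('a qgen, 'r) fm" where "cg h \<equiv> fm_gen (QC h)"
abbreviation "qs \<equiv> (of_int q :: 'r)"
abbreviation "br \<equiv> lbr G"
abbreviation "ad \<equiv> ladd G"
abbreviation "sm \<equiv> lsmult G"
abbreviation "ng \<equiv> lneg G"

lemma H_carrier [simp]: "h \<in> H \<Longrightarrow> h \<in> C"
  using ideal_H unfolding lie_ideal_def by auto
lemma H_zero [simp]: "lzero G \<in> H" using ideal_H unfolding lie_ideal_def by auto
lemma H_add [simp]: "h \<in> H \<Longrightarrow> h' \<in> H \<Longrightarrow> ad h h' \<in> H"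
  using ideal_H unfolding lie_ideal_def by auto
lemma H_neg [simp]: "h \<in> H \<Longrightarrow> ng h \<in> H"
  using ideal_H unfolding lie_ideal_def by auto
lemma H_sm [simp]: "h \<in> H \<Longrightarrow> sm c h \<in> H"
  using ideal_H unfolding lie_ideal_def by auto
lemma H_brl [simp]: "g \<in> C \<Longrightarrow> h \<in> H \<Longrightarrow> br g h \<in> H"
  using ideal_H unfolding lie_ideal_def by auto
lemma H_brr [simp]: "h \<in> H \<Longrightarrow> g \<in> C \<Longrightarrow> br h g \<in> H"
  using g.br_anticomm[of g h] H_carrier by simp

lemma qgens_cases:
  obtains (non_gen) "x \<notin> qgens G H"
  | (tens) h g where "x = QT h g" "h \<in> H" "g \<in> C"
  | (curl) h where "x = QC h" "h \<in> H"
  by (cases x) (auto simp: qgens_def)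

lemma qtensor_rel_in_I: "r \<in> qtensor_rels G H q \<Longrightarrow> r \<in> I"
  by (rule rel_ideal_rel) simp

lemma rel_non_gen: "y \<notin> qgens G H \<Longrightarrow> fm_gen y \<in> I"
  by (rule qtensor_rel_in_I) (simp only: qtensor_rels_def Let_def Un_iff, intro disjI1 disjI2; blast)

lemma rel1_left: "h \<in> H \<Longrightarrow> g \<in> C \<Longrightarrow> fm_smult c (tg h g) - tg (sm c h) g \<in> I"
  by (rule qtensor_rel_in_I) (simp only: qtensor_rels_def Let_def Un_iff, intro disjI1 disjI2; blast)
lemma rel1_right: "h \<in> H \<Longrightarrow> g \<in> C \<Longrightarrow> fm_smult c (tg h g) - tg h (sm c g) \<in> I"
  by (rule qtensor_rel_in_I) (simp only: qtensor_rels_def Let_def Un_iff, intro disjI1 disjI2; blast)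
lemma rel2: "h \<in> H \<Longrightarrow> h' \<in> H \<Longrightarrow> g \<in> C \<Longrightarrow> tg (ad h h') g - (tg h g + tg h' g) \<in> I"
  by (rule qtensor_rel_in_I) (simp only: qtensor_rels_def Let_def Un_iff, intro disjI1 disjI2; blast)
lemma rel3: "h \<in> H \<Longrightarrow> g \<in> C \<Longrightarrow> g' \<in> C \<Longrightarrow> tg h (ad g g') - (tg h g + tg h g') \<in> I"
  by (rule qtensor_rel_in_I) (simp only: qtensor_rels_def Let_def Un_iff, intro disjI1 disjI2; blast)
lemma rel4: "h \<in> H \<Longrightarrow> h' \<in> H \<Longrightarrow> g \<in> C \<Longrightarrow> tg (br h h') g - (tg h (br h' g) - tg h' (br h g)) \<in> I"
  by (rule qtensor_rel_in_I) (simp only: qtensor_rels_def Let_def Un_iff, intro disjI1 disjI2; blast)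
lemma rel5: "h \<in> H \<Longrightarrow> g \<in> C \<Longrightarrow> g' \<in> C \<Longrightarrow> tg h (br g g') - (tg (br g' h) g - tg (br g h) g') \<in> I"
  by (rule qtensor_rel_in_I) (simp only: qtensor_rels_def Let_def Un_iff, intro disjI1 disjI2; blast)
lemma rel6: "h \<in> H \<Longrightarrow> g \<in> C \<Longrightarrow> h' \<in> H \<Longrightarrow> g' \<in> C \<Longrightarrow> fm_br (tg h g) (tg h' g') - tg (br h g) (br h' g') \<in> I"
  by (rule qtensor_rel_in_I) (simp only: qtensor_rels_def Let_def Un_iff, intro disjI1 disjI2; blast)
lemma rel7: "h' \<in> H \<Longrightarrow> h \<in> H \<Longrightarrow> g \<in> C \<Longrightarrow>
    fm_br (cg h') (tg h g) - (tg (br (sm qs h') h) g + tg h (br (sm qs h') g)) \<in> I"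
  by (rule qtensor_rel_in_I) (simp only: qtensor_rels_def Let_def Un_iff, intro disjI1 disjI2; blast)
lemma rel8:
  "h \<in> H \<Longrightarrow> h' \<in> H \<Longrightarrow> cg (ad (sm c h) (sm c' h')) - (fm_smult c (cg h) + fm_smult c' (cg h')) \<in> I"
  by (rule qtensor_rel_in_I) (simp only: qtensor_rels_def Let_def Un_iff, intro disjI1 disjI2; blast)
lemma rel9: "h \<in> H \<Longrightarrow> h' \<in> H \<Longrightarrow> fm_br (cg h) (cg h') - tg (sm qs h) (sm qs h') \<in> I"
  by (rule qtensor_rel_in_I) (simp only: qtensor_rels_def Let_def Un_iff, intro disjI1 disjI2; blast)
lemma rel10: "h \<in> H \<Longrightarrow> g \<in> C \<Longrightarrow> cg (br h g) - fm_smult qs (tg h g) \<in> I"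
  by (rule qtensor_rel_in_I) (simp only: qtensor_rels_def Let_def Un_iff, intro disjI1 disjI2; blast)

lemma tg_zero_left: "g \<in> C \<Longrightarrow> tg (lzero G) g \<in> I"
  using rel_ideal_neg[OF rel1_left[of "lzero G" g 0]] by simp
lemma tg_zero_right: "h \<in> H \<Longrightarrow> tg h (lzero G) \<in> I"
  using rel_ideal_neg[OF rel1_right[of h "lzero G" 0]] by simp
lemma cg_zero: "cg (lzero G) \<in> I"
  using rel8[of "lzero G" "lzero G" 0 0] by simp

text \<open>Variants with the argument given by an equation, so that \<open>intro\<close> can use them when the
  argument only equals a sum or difference up to rewriting.\<close>
lemma rel2_at: "\<lbrakk>h \<in> H; h' \<in> H; g \<in> C; a = ad h h'\<rbrakk> \<Longrightarrow> tg a g - (tg h g + tg h' g) \<in> I"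
  using rel2 by simp
lemma rel3_at: "\<lbrakk>h \<in> H; g \<in> C; g' \<in> C; a = ad g g'\<rbrakk> \<Longrightarrow> tg h a - (tg h g + tg h g') \<in> I"
  using rel3 by simp
lemma tg_neg_left: "\<lbrakk>h \<in> H; g \<in> C\<rbrakk> \<Longrightarrow> tg (ng h) g + tg h g \<in> I"
  using rel_ideal_neg[OF rel1_left[of h g "-1"]] by (simp add: g.sm_minus_one fm_smult_minus_one add.commute)
lemma tg_neg_right: "\<lbrakk>h \<in> H; g \<in> C\<rbrakk> \<Longrightarrow> tg h (ng g) + tg h g \<in> I"
  using rel_ideal_neg[OF rel1_right[of h g "-1"]] by (simp add: g.sm_minus_one fm_smult_minus_one add.commute)
lemma rel2_diff: "\<lbrakk>h \<in> H; h' \<in> H; g \<in> C; a = ad h (ng h')\<rbrakk> \<Longrightarrow> tg a g - (tg h g - tg h' g) \<in> I"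
proof -
  assume a: "h \<in> H" "h' \<in> H" "g \<in> C" "a = ad h (ng h')"
  have "tg a g - (tg h g - tg h' g) = (tg a g - (tg h g + tg (ng h') g)) + (tg (ng h') g + tg h' g)" by simp
  also have "\<dots> \<in> I" using a rel_ideal_add[OF rel2[of h "ng h'" g] tg_neg_left[of h' g]] by simp
  finally show ?thesis .
qed
lemma rel3_diff: "\<lbrakk>h \<in> H; g \<in> C; g' \<in> C; a = ad g (ng g')\<rbrakk> \<Longrightarrow> tg h a - (tg h g - tg h g') \<in> I"
proof -
  assume a: "h \<in> H" "g \<in> C" "g' \<in> C" "a = ad g (ng g')"
  have "tg h a - (tg h g - tg h g') = (tg h a - (tg h g + tg h (ng g'))) + (tg h (ng g') + tg h g')" by simp
  also have "\<dots> \<in> I" using a rel_ideal_add[OF rel3[of h g "ng g'"] tg_neg_right[of h g']] by simp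
  finally show ?thesis .
qed
lemma cg_add: "\<lbrakk>h \<in> H; h' \<in> H; a = ad h h'\<rbrakk> \<Longrightarrow> cg a - (cg h + cg h') \<in> I"
  using rel8[of h h' 1 1] by simp
lemma cg_smult: "\<lbrakk>h \<in> H; a = sm c h\<rbrakk> \<Longrightarrow> cg a - fm_smult c (cg h) \<in> I"
  using rel8[of h h c 0] by simp
lemma cg_neg: "h \<in> H \<Longrightarrow> cg (ng h) + cg h \<in> I"
  using cg_smult[of h "ng h" "-1"] by (simp add: g.sm_minus_one fm_smult_minus_one)
lemma cg_diff: "\<lbrakk>h \<in> H; h' \<in> H; a = ad h (ng h')\<rbrakk> \<Longrightarrow> cg a - (cg h - cg h') \<in> I"
proof -
  assume a: "h \<in> H" "h' \<in> H" "a = ad h (ng h')"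
  have "cg a - (cg h - cg h') = (cg a - (cg h + cg (ng h'))) + (cg (ng h') + cg h')" by simp
  also have "\<dots> \<in> I" using a rel_ideal_add[OF cg_add[of h "ng h'"] cg_neg[of h']] by simp
  finally show ?thesis .
qed
lemma cg_zeroI: "\<lbrakk>a = lzero G\<rbrakk> \<Longrightarrow> cg a \<in> I"
  using cg_zero by simp

definition xi_gen :: "'a qgen \<Rightarrow> 'a" where
  "xi_gen x = (case x of QT h g \<Rightarrow> (if h \<in> H \<and> g \<in> C then br h g else lzero G)
                     | QC h \<Rightarrow> (if h \<in> H then sm qs h else lzero G))"

lemma xi_gen_closed [simp]: "xi_gen x \<in> C"
  by (auto simp: xi_gen_def split: qgen.split)

lemma xi_gen_QT [simp]: "h \<in> H \<Longrightarrow> g \<in> C \<Longrightarrow> xi_gen (QT h g) = br h g"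
  by (simp add: xi_gen_def)
lemma xi_gen_QC [simp]: "h \<in> H \<Longrightarrow> xi_gen (QC h) = sm qs h"
  by (simp add: xi_gen_def)
lemma xi_gen_non_gen: "x \<notin> qgens G H \<Longrightarrow> xi_gen x = lzero G"
  by (auto simp: xi_gen_def qgens_def split: qgen.split)
lemma xi_gen_in_H: "xi_gen x \<in> H"
  by (auto simp: xi_gen_def split: qgen.split)

definition xi_fm :: "('a qgen, 'r) fm \<Rightarrow> 'a" where
  "xi_fm p = g.lin_ext (word_eval G xi_gen) p"

lemma word_eval_xi_gen_closed: "word_eval G xi_gen u \<in> C" by (rule g.word_eval_closed) simp

lemma xi_fm_closed [simp]: "xi_fm p \<in> C"
  unfolding xi_fm_def using word_eval_xi_gen_closed by simp
lemma xi_fm_add [simp]: "xi_fm (a + b) = ad (xi_fm a) (xi_fm b)"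
  unfolding xi_fm_def using word_eval_xi_gen_closed by (rule g.lin_ext_add)
lemma xi_fm_diff [simp]: "xi_fm (a - b) = ad (xi_fm a) (ng (xi_fm b))"
  unfolding xi_fm_def using word_eval_xi_gen_closed by (rule g.lin_ext_diff)
lemma xi_fm_smult [simp]: "xi_fm (fm_smult c a) = sm c (xi_fm a)"
  unfolding xi_fm_def using word_eval_xi_gen_closed by (rule g.lin_ext_smult)
lemma xi_fm_zero [simp]: "xi_fm 0 = lzero G" unfolding xi_fm_def by simp
lemma xi_fm_br [simp]: "xi_fm (fm_br a b) = br (xi_fm a) (xi_fm b)"
  unfolding xi_fm_def using word_eval_xi_gen_closed by (rule g.lin_ext_br_hom) simp
lemma xi_fm_gen [simp]: "xi_fm (fm_gen x) = xi_gen x"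
  unfolding xi_fm_def fm_gen_eq_word using word_eval_xi_gen_closed by (simp add: g.lin_ext_word)

lemma xi_fm_in_H: "xi_fm p \<in> H"
proof -
  have "\<forall>u. word_eval G xi_gen u \<in> H"
  proof
    fix u show "word_eval G xi_gen u \<in> H" by (induction u) (auto simp: xi_gen_in_H)
  qed
  then show ?thesis unfolding xi_fm_def g.lin_ext_def
    by (intro g.lsum_in) auto
qed

lemma xi_fm_rels:
  assumes "r \<in> rels"
  shows "xi_fm r = lzero G"
proof -
  from assms consider (E) "r \<in> E" | (Q) "r \<in> qtensor_rels G H q" by blast
  then show ?thesis
  proof cases
    case E
    then obtain h where "h \<in> H" "r = tg h h" using extra_rels by auto
    then show ?thesis by (simp add: g.br_self)
  next
    case Q
    then show ?thesis
      unfolding qtensor_rels_def Let_def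
      apply (elim UnE CollectE exE conjE)
      subgoal by (simp add: xi_gen_non_gen)
      subgoal by (simp add: g.br_sm_left)
      subgoal by (simp add: g.br_sm_right)
      subgoal by (simp add: g.br_add_left)
      subgoal by (simp add: g.br_add_right)
      subgoal by simp (rule g.br_br_left, auto)
      subgoal by simp (rule g.br_br_right, auto)
      subgoal by simp
      subgoal by simp (rule g.br_leibniz, auto)
      subgoal by (simp add: g.sm_add g.sm_sm[symmetric] mult.commute)
      subgoal by simp
      subgoal by simp
      done
  qed
qed

lemma lie_hom_xi_fm_rep: "lie_hom (presented_lie rels) G (\<lambda>A. xi_fm (fm_rep A))"
  unfolding xi_fm_def by (rule g.lie_hom_presented_lie[OF xi_gen_closed xi_fm_rels[unfolded xi_fm_def]])
lemma xi_fm_fm_rep: "xi_fm (fm_rep (rel_class rels p)) = xi_fm p"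
  unfolding xi_fm_def by (rule g.lin_ext_word_eval_fm_rep[OF xi_gen_closed xi_fm_rels[unfolded xi_fm_def]])
lemma xi_fm_congruent: "a - b \<in> I \<Longrightarrow> xi_fm a = xi_fm b"
  using xi_fm_fm_rep[of a] xi_fm_fm_rep[of b] rel_class_eqI[of a b rels] by metis

text \<open>Membership in \<open>I\<close> is shown below by cancelling known elements of \<open>I\<close> one at a time
  (the rule backtracks over both signs) until ring normalisation leaves \<open>0\<close>.\<close>
lemma ideal_cancel:
  "d \<in> I \<Longrightarrow> X - d \<in> I \<Longrightarrow> X \<in> I"
  "d \<in> I \<Longrightarrow> X + d \<in> I \<Longrightarrow> X \<in> I"
  using rel_ideal_add[of "X - d" rels d] rel_ideal_diff[of "X + d" rels d] by simp_all

definition act_gen :: "'a \<Rightarrow> 'a qgen \<Rightarrow> ('a qgen, 'r) fm" where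
  "act_gen g0 x = (case x of QT h g \<Rightarrow> (if h \<in> H \<and> g \<in> C then tg (br g0 h) g + tg h (br g0 g) else 0)
                      | QC h \<Rightarrow> (if h \<in> H then cg (br g0 h) else 0))"

lemma act_gen_QT [simp]: "h \<in> H \<Longrightarrow> g \<in> C \<Longrightarrow> act_gen g0 (QT h g) = tg (br g0 h) g + tg h (br g0 g)"
  by (simp add: act_gen_def)
lemma act_gen_QC [simp]: "h \<in> H \<Longrightarrow> act_gen g0 (QC h) = cg (br g0 h)"
  by (simp add: act_gen_def)
lemma act_gen_non_gen: "x \<notin> qgens G H \<Longrightarrow> act_gen g0 x = 0"
  by (auto simp: act_gen_def qgens_def split: qgen.split)

abbreviation act_fm :: "'a \<Rightarrow> ('a qgen, 'r) fm \<Rightarrow> ('a qgen, 'r) fm" where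
  "act_fm g \<equiv> fm_der (act_gen g)"

context
  fixes g0 assumes g0: "g0 \<in> C"
begin

lemma act_rel_non_gen: "y \<notin> qgens G H \<Longrightarrow> act_fm g0 (fm_gen y) \<in> I"
  by (simp add: act_gen_non_gen rel_ideal_zero)

lemma act_rel1_left:
  assumes "h \<in> H" "g \<in> C"
  shows "act_fm g0 (fm_smult c (tg h g) - tg (sm c h) g) \<in> I"
proof -
  have f1: "fm_smult c (tg (br g0 h) g) - tg (sm c (br g0 h)) g \<in> I"
    using assms g0 by (intro rel1_left) auto
  have f2: "fm_smult c (tg h (br g0 g)) - tg (sm c h) (br g0 g) \<in> I"
    using assms g0 by (intro rel1_left) auto
  show ?thesis
    by (rule ideal_cancel[OF f1], rule ideal_cancel[OF f2],
        (simp add: assms g0 g.br_sm_right algebra_simps rel_ideal_zero; fail))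
qed

lemma act_rel1_right:
  assumes "h \<in> H" "g \<in> C"
  shows "act_fm g0 (fm_smult c (tg h g) - tg h (sm c g)) \<in> I"
proof -
  have f1: "fm_smult c (tg (br g0 h) g) - tg (br g0 h) (sm c g) \<in> I"
    using assms g0 by (intro rel1_right) auto
  have f2: "fm_smult c (tg h (br g0 g)) - tg h (sm c (br g0 g)) \<in> I"
    using assms g0 by (intro rel1_right) auto
  show ?thesis
    by (rule ideal_cancel[OF f1], rule ideal_cancel[OF f2],
        (simp add: assms g0 g.br_sm_right algebra_simps rel_ideal_zero; fail))
qed

lemma act_rel2:
  assumes "h \<in> H" "h' \<in> H" "g \<in> C"
  shows "act_fm g0 (tg (ad h h') g - (tg h g + tg h' g)) \<in> I"
proof -
  have f1: "tg (ad (br g0 h) (br g0 h')) g - (tg (br g0 h) g + tg (br g0 h') g) \<in> I"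
    using assms g0 by (intro rel2) auto
  have f2: "tg (ad h h') (br g0 g) - (tg h (br g0 g) + tg h' (br g0 g)) \<in> I"
    using assms g0 by (intro rel2) auto
  show ?thesis
    by (rule ideal_cancel[OF f1], rule ideal_cancel[OF f2],
        (simp add: assms g0 g.br_add_right algebra_simps rel_ideal_zero; fail))
qed

lemma act_rel3:
  assumes "h \<in> H" "g \<in> C" "g' \<in> C"
  shows "act_fm g0 (tg h (ad g g') - (tg h g + tg h g')) \<in> I"
proof -
  have f1: "tg (br g0 h) (ad g g') - (tg (br g0 h) g + tg (br g0 h) g') \<in> I"
    using assms g0 by (intro rel3) auto
  have f2: "tg h (ad (br g0 g) (br g0 g')) - (tg h (br g0 g) + tg h (br g0 g')) \<in> I"
    using assms g0 by (intro rel3) auto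
  show ?thesis
    by (rule ideal_cancel[OF f1], rule ideal_cancel[OF f2],
        (simp add: assms g0 g.br_add_right algebra_simps rel_ideal_zero; fail))
qed

lemma act_rel4:
  assumes "h \<in> H" "h' \<in> H" "g \<in> C"
  shows "act_fm g0 (tg (br h h') g - (tg h (br h' g) - tg h' (br h g))) \<in> I"
proof -
  have f1: "tg (br g0 (br h h')) g - (tg (br (br g0 h) h') g + tg (br h (br g0 h')) g) \<in> I"
    using assms g0 by (intro rel2_at) (auto simp: g.br_leibniz[of g0 h h'])
  have f2: "tg h (br g0 (br h' g)) - (tg h (br (br g0 h') g) + tg h (br h' (br g0 g))) \<in> I"
    using assms g0 by (intro rel3_at) (auto simp: g.br_leibniz[of g0 h' g])
  have f3: "tg h' (br g0 (br h g)) - (tg h' (br (br g0 h) g) + tg h' (br h (br g0 g))) \<in> I"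
    using assms g0 by (intro rel3_at) (auto simp: g.br_leibniz[of g0 h g])
  have f4: "tg (br (br g0 h) h') g - (tg (br g0 h) (br h' g) - tg h' (br (br g0 h) g)) \<in> I"
    using assms g0 by (intro rel4) auto
  have f5: "tg (br h (br g0 h')) g - (tg h (br (br g0 h') g) - tg (br g0 h') (br h g)) \<in> I"
    using assms g0 by (intro rel4) auto
  have f6: "tg (br h h') (br g0 g) - (tg h (br h' (br g0 g)) - tg h' (br h (br g0 g))) \<in> I"
    using assms g0 by (intro rel4) auto
  show ?thesis
    by (rule ideal_cancel[OF f1], rule ideal_cancel[OF f2], rule ideal_cancel[OF f3],
        rule ideal_cancel[OF f4], rule ideal_cancel[OF f5], rule ideal_cancel[OF f6],
        (simp add: assms g0 algebra_simps rel_ideal_zero; fail))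
qed


lemma act_rel5:
  assumes "h \<in> H" "g \<in> C" "g' \<in> C"
  shows "act_fm g0 (tg h (br g g') - (tg (br g' h) g - tg (br g h) g')) \<in> I"
proof -
  have f1: "tg h (br g0 (br g g')) - (tg h (br (br g0 g) g') + tg h (br g (br g0 g'))) \<in> I"
    using assms g0 by (intro rel3_at) (auto simp: g.br_leibniz[of g0 g g'])
  have f2: "tg (br g0 (br g' h)) g - (tg (br (br g0 g') h) g + tg (br g' (br g0 h)) g) \<in> I"
    using assms g0 by (intro rel2_at) (auto simp: g.br_leibniz[of g0 g' h])
  have f3: "tg (br g0 (br g h)) g' - (tg (br (br g0 g) h) g' + tg (br g (br g0 h)) g') \<in> I"
    using assms g0 by (intro rel2_at) (auto simp: g.br_leibniz[of g0 g h])
  have f4: "tg (br g0 h) (br g g') - (tg (br g' (br g0 h)) g - tg (br g (br g0 h)) g') \<in> I"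
    using assms g0 by (intro rel5) auto
  have f5: "tg h (br (br g0 g) g') - (tg (br g' h) (br g0 g) - tg (br (br g0 g) h) g') \<in> I"
    using assms g0 by (intro rel5) auto
  have f6: "tg h (br g (br g0 g')) - (tg (br (br g0 g') h) g - tg (br g h) (br g0 g')) \<in> I"
    using assms g0 by (intro rel5) auto
  show ?thesis
    by (rule ideal_cancel[OF f1], rule ideal_cancel[OF f2], rule ideal_cancel[OF f3],
        rule ideal_cancel[OF f4], rule ideal_cancel[OF f5], rule ideal_cancel[OF f6],
        (simp add: assms g0 algebra_simps rel_ideal_zero; fail))
qed

lemma act_rel6:
  assumes "h \<in> H" "g \<in> C" "h' \<in> H" "g' \<in> C"
  shows "act_fm g0 (fm_br (tg h g) (tg h' g') - tg (br h g) (br h' g')) \<in> I"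
proof -
  have f1: "fm_br (tg (br g0 h) g) (tg h' g') - tg (br (br g0 h) g) (br h' g') \<in> I"
    using assms g0 by (intro rel6) auto
  have f2: "fm_br (tg h (br g0 g)) (tg h' g') - tg (br h (br g0 g)) (br h' g') \<in> I"
    using assms g0 by (intro rel6) auto
  have f3: "fm_br (tg h g) (tg (br g0 h') g') - tg (br h g) (br (br g0 h') g') \<in> I"
    using assms g0 by (intro rel6) auto
  have f4: "fm_br (tg h g) (tg h' (br g0 g')) - tg (br h g) (br h' (br g0 g')) \<in> I"
    using assms g0 by (intro rel6) auto
  have f5: "tg (br g0 (br h g)) (br h' g') - (tg (br (br g0 h) g) (br h' g') + tg (br h (br g0 g)) (br h' g')) \<in> I"
    using assms g0 by (intro rel2_at) (auto simp: g.br_leibniz[of g0 h g])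
  have f6: "tg (br h g) (br g0 (br h' g')) - (tg (br h g) (br (br g0 h') g') + tg (br h g) (br h' (br g0 g'))) \<in> I"
    using assms g0 by (intro rel3_at) (auto simp: g.br_leibniz[of g0 h' g'])
  show ?thesis
    by (rule ideal_cancel[OF f1], rule ideal_cancel[OF f2], rule ideal_cancel[OF f3],
        rule ideal_cancel[OF f4], rule ideal_cancel[OF f5], rule ideal_cancel[OF f6],
        (simp add: assms g0 algebra_simps rel_ideal_zero; fail))
qed

lemma act_rel7:
  assumes "h' \<in> H" "h \<in> H" "g \<in> C"
  shows "act_fm g0 (fm_br (cg h') (tg h g) - (tg (br (sm qs h') h) g + tg h (br (sm qs h') g))) \<in> I"
proof -
  have e1: "br g0 (br (sm qs h') h) = ad (br (sm qs (br g0 h')) h) (br (sm qs h') (br g0 h))"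
    using assms g0 by (simp add: g.br_leibniz[of g0 "sm qs h'" h] g.br_sm_right)
  have e2: "br g0 (br (sm qs h') g) = ad (br (sm qs (br g0 h')) g) (br (sm qs h') (br g0 g))"
    using assms g0 by (simp add: g.br_leibniz[of g0 "sm qs h'" g] g.br_sm_right)
  have f1: "fm_br (cg (br g0 h')) (tg h g) - (tg (br (sm qs (br g0 h')) h) g + tg h (br (sm qs (br g0 h')) g)) \<in> I"
    using assms g0 by (intro rel7) auto
  have f2: "fm_br (cg h') (tg (br g0 h) g) - (tg (br (sm qs h') (br g0 h)) g + tg (br g0 h) (br (sm qs h') g)) \<in> I"
    using assms g0 by (intro rel7) auto
  have f3: "fm_br (cg h') (tg h (br g0 g)) - (tg (br (sm qs h') h) (br g0 g) + tg h (br (sm qs h') (br g0 g))) \<in> I"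
    using assms g0 by (intro rel7) auto
  have f4: "tg (br g0 (br (sm qs h') h)) g - (tg (br (sm qs (br g0 h')) h) g + tg (br (sm qs h') (br g0 h)) g) \<in> I"
    using assms g0 by (intro rel2_at e1) auto
  have f5: "tg h (br g0 (br (sm qs h') g)) - (tg h (br (sm qs (br g0 h')) g) + tg h (br (sm qs h') (br g0 g))) \<in> I"
    using assms g0 by (intro rel3_at e2) auto
  show ?thesis
    by (rule ideal_cancel[OF f1], rule ideal_cancel[OF f2], rule ideal_cancel[OF f3],
        rule ideal_cancel[OF f4], rule ideal_cancel[OF f5],
        (simp add: assms g0 algebra_simps rel_ideal_zero; fail))
qed

lemma act_rel8:
  assumes "h \<in> H" "h' \<in> H"
  shows "act_fm g0 (cg (ad (sm c h) (sm c' h')) - (fm_smult c (cg h) + fm_smult c' (cg h'))) \<in> I"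
proof -
  have f1: "cg (ad (sm c (br g0 h)) (sm c' (br g0 h'))) - (fm_smult c (cg (br g0 h)) + fm_smult c' (cg (br g0 h'))) \<in> I"
    using assms g0 by (intro rel8) auto
  show ?thesis
    by (rule ideal_cancel[OF f1],
        (simp add: assms g0 g.br_add_right g.br_sm_right algebra_simps rel_ideal_zero; fail))
qed

lemma act_rel9:
  assumes "h \<in> H" "h' \<in> H"
  shows "act_fm g0 (fm_br (cg h) (cg h') - tg (sm qs h) (sm qs h')) \<in> I"
proof -
  have f1: "fm_br (cg (br g0 h)) (cg h') - tg (sm qs (br g0 h)) (sm qs h') \<in> I"
    using assms g0 by (intro rel9) auto
  have f2: "fm_br (cg h) (cg (br g0 h')) - tg (sm qs h) (sm qs (br g0 h')) \<in> I"
    using assms g0 by (intro rel9) auto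
  show ?thesis
    by (rule ideal_cancel[OF f1], rule ideal_cancel[OF f2],
        (simp add: assms g0 g.br_sm_right algebra_simps rel_ideal_zero; fail))
qed

lemma act_rel10:
  assumes "h \<in> H" "g \<in> C"
  shows "act_fm g0 (cg (br h g) - fm_smult qs (tg h g)) \<in> I"
proof -
  have f1: "cg (br (br g0 h) g) - fm_smult qs (tg (br g0 h) g) \<in> I" using assms g0 by (intro rel10) auto
  have f2: "cg (br h (br g0 g)) - fm_smult qs (tg h (br g0 g)) \<in> I" using assms g0 by (intro rel10) auto
  have f3: "cg (br g0 (br h g)) - (cg (br (br g0 h) g) + cg (br h (br g0 g))) \<in> I"
    using assms g0 by (intro cg_add) (auto simp: g.br_leibniz[of g0 h g])
  show ?thesis
    by (rule ideal_cancel[OF f1], rule ideal_cancel[OF f2], rule ideal_cancel[OF f3],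
        (simp add: assms g0 algebra_simps rel_ideal_zero; fail))
qed

lemma tg_symmetric:
  assumes "E \<noteq> {}" "x \<in> H" "y \<in> H"
  shows "tg x y + tg y x \<in> I"
proof -
  have EE: "E = {fm_gen (QT h h) | h. h \<in> H}" using extra_rels assms by auto
  have Et: "z \<in> H \<Longrightarrow> tg z z \<in> I" for z by (rule fm_ideal.base) (auto simp: EE)
  let ?s = "ad x y"
  have f0: "tg ?s ?s \<in> I" using assms by (intro Et) auto
  have fx: "tg x x \<in> I" using assms by (intro Et) auto
  have fy: "tg y y \<in> I" using assms by (intro Et) auto
  have f1: "tg ?s ?s - (tg x ?s + tg y ?s) \<in> I" using assms by (intro rel2) auto
  have f2: "tg x ?s - (tg x x + tg x y) \<in> I" using assms by (intro rel3) auto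
  have f3: "tg y ?s - (tg y x + tg y y) \<in> I" using assms by (intro rel3) auto
  show ?thesis
    by (rule ideal_cancel[OF f0], rule ideal_cancel[OF fx], rule ideal_cancel[OF fy],
        rule ideal_cancel[OF f1], rule ideal_cancel[OF f2], rule ideal_cancel[OF f3],
        (simp add: algebra_simps rel_ideal_zero; fail))
qed

lemma act_rel_wedge:
  assumes "r \<in> E"
  shows "act_fm g0 r \<in> I"
proof -
  obtain h where h: "h \<in> H" "r = tg h h" using extra_rels assms by auto
  have "E \<noteq> {}" using assms by auto
  then show ?thesis using h g0 tg_symmetric[of "br g0 h" h] by simp
qed

lemma act_rels:
  assumes "r \<in> rels"
  shows "act_fm g0 r \<in> I"
proof -
  from assms consider (E) "r \<in> E" | (Q) "r \<in> qtensor_rels G H q" by blast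
  then show ?thesis
  proof cases
    case E then show ?thesis by (rule act_rel_wedge)
  next
    case Q
    from Q[unfolded qtensor_rels_def Let_def] show ?thesis
      apply (elim UnE CollectE exE conjE)
      by (hypsubst, (rule act_rel_non_gen act_rel1_left act_rel1_right act_rel2 act_rel3 act_rel4
          act_rel5 act_rel6 act_rel7 act_rel8 act_rel9 act_rel10; assumption))+
  qed
qed

end

lemma act_rel_ideal: "g \<in> C \<Longrightarrow> p \<in> I \<Longrightarrow> act_fm g p \<in> I"
  by (rule fm_der_rel_ideal[OF act_rels])

lemma rel_class_act_fm_rep:
  "g \<in> C \<Longrightarrow> rel_class rels (act_fm g (fm_rep (rel_class rels p))) = rel_class rels (act_fm g p)"
  by (rule rel_class_fm_der_fm_rep[OF act_rels])

lemma gen_brackets_spanned_rels: "gen_brackets_spanned rels"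
proof -
  have non_gen_left: "\<exists>s\<in>gen_span. fm_br (fm_gen x) b - s \<in> I" if "x \<notin> qgens G H" for x b
    using rel_ideal_br_right[OF rel_non_gen[OF that]] by (intro bexI[of _ 0]) (auto intro: gen_span.intros)
  have non_gen_right: "\<exists>s\<in>gen_span. fm_br a (fm_gen y) - s \<in> I" if "y \<notin> qgens G H" for a y
    using rel_ideal_br_left[OF rel_non_gen[OF that]] by (intro bexI[of _ 0]) (auto intro: gen_span.intros)
  have tg_tg: "\<exists>s\<in>gen_span. fm_br (tg h g) (tg h' g') - s \<in> I"
    if "h \<in> H" "g \<in> C" "h' \<in> H" "g' \<in> C" for h g h' g'
    using that rel6[of h g h' g'] by (intro bexI[of _ "tg (br h g) (br h' g')"]) (auto intro: gen_span.intros)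
  have cg_tg: "\<exists>s\<in>gen_span. fm_br (cg h') (tg h g) - s \<in> I" if "h' \<in> H" "h \<in> H" "g \<in> C" for h' h g
    using that rel7[of h' h g]
    by (intro bexI[of _ "tg (br (sm qs h') h) g + tg h (br (sm qs h') g)"]) (auto intro: gen_span.intros)
  have tg_cg: "\<exists>s\<in>gen_span. fm_br (tg h g) (cg h') - s \<in> I"
    if hyps: "h' \<in> H" "h \<in> H" "g \<in> C" for h' h g
  proof -
    obtain s where s: "s \<in> gen_span" "fm_br (cg h') (tg h g) - s \<in> I"
      using cg_tg[OF hyps] by blast
    have "fm_br (tg h g) (cg h') - fm_smult (-1) s =
        (fm_br (tg h g) (cg h') + fm_br (cg h') (tg h g)) - (fm_br (cg h') (tg h g) - s)"
      by (simp add: fm_smult_minus_one)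
    also have "\<dots> \<in> I"
      by (rule rel_ideal_diff[OF rel_ideal_br_anticomm s(2)])
    finally show ?thesis
      using s by (blast intro: gen_span.smult)
  qed
  have cg_cg: "\<exists>s\<in>gen_span. fm_br (cg h) (cg h') - s \<in> I" if "h \<in> H" "h' \<in> H" for h h'
    using that rel9[of h h'] by (intro bexI[of _ "tg (sm qs h) (sm qs h')"]) (auto intro: gen_span.intros)
  show ?thesis
    unfolding gen_brackets_spanned_def
    by (intro allI, case_tac x rule: qgens_cases; case_tac y rule: qgens_cases)
      (auto intro: non_gen_left non_gen_right intro!: tg_tg tg_cg cg_tg cg_cg)
qed

lemmas induct_mod_I = gen_span_induct_mod[OF gen_brackets_spanned_rels]
lemmas linear_into_I = linear_into_rel_ideal[OF gen_brackets_spanned_rels]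

lemma act_add:
  assumes "g1 \<in> C" "g2 \<in> C"
  shows "act_fm (ad g1 g2) p - (act_fm g1 p + act_fm g2 p) \<in> I"
proof (rule linear_into_I[where \<Phi>="\<lambda>p. act_fm (ad g1 g2) p - (act_fm g1 p + act_fm g2 p)"])
  fix a assume "a \<in> I"
  then show "act_fm (ad g1 g2) a - (act_fm g1 a + act_fm g2 a) \<in> I"
    using assms by (intro rel_ideal_diff rel_ideal_add act_rel_ideal) auto
next
  fix x show "act_fm (ad g1 g2) (fm_gen x) - (act_fm g1 (fm_gen x) + act_fm g2 (fm_gen x)) \<in> I"
  proof (cases x rule: qgens_cases)
    case non_gen then show ?thesis by (simp add: act_gen_non_gen rel_ideal_zero)
  next
    case (tens h g)
    have f1: "tg (ad (br g1 h) (br g2 h)) g - (tg (br g1 h) g + tg (br g2 h) g) \<in> I"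
      using tens assms by (intro rel2) auto
    have f2: "tg h (ad (br g1 g) (br g2 g)) - (tg h (br g1 g) + tg h (br g2 g)) \<in> I"
      using tens assms by (intro rel3) auto
    show ?thesis
      by (rule ideal_cancel[OF f1], rule ideal_cancel[OF f2],
        (simp add: tens assms g.br_add_left algebra_simps rel_ideal_zero; fail))
  next
    case (curl h)
    have f1: "cg (ad (br g1 h) (br g2 h)) - (cg (br g1 h) + cg (br g2 h)) \<in> I"
      using curl assms by (intro cg_add) auto
    show ?thesis
      by (rule ideal_cancel[OF f1], (simp add: curl assms g.br_add_left algebra_simps rel_ideal_zero; fail))
  qed
qed (simp_all add: algebra_simps)

lemma act_smult:
  assumes "g \<in> C"
  shows "act_fm (sm c g) p - fm_smult c (act_fm g p) \<in> I"
proof (rule linear_into_I[where \<Phi>="\<lambda>p. act_fm (sm c g) p - fm_smult c (act_fm g p)"])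
  fix a assume "a \<in> I"
  then show "act_fm (sm c g) a - fm_smult c (act_fm g a) \<in> I"
    using assms by (intro rel_ideal_diff rel_ideal_smult act_rel_ideal) auto
next
  fix x show "act_fm (sm c g) (fm_gen x) - fm_smult c (act_fm g (fm_gen x)) \<in> I"
  proof (cases x rule: qgens_cases)
    case non_gen then show ?thesis by (simp add: act_gen_non_gen rel_ideal_zero)
  next
    case (tens h g')
    have f1: "fm_smult c (tg (br g h) g') - tg (sm c (br g h)) g' \<in> I"
      using tens assms by (intro rel1_left) auto
    have f2: "fm_smult c (tg h (br g g')) - tg h (sm c (br g g')) \<in> I"
      using tens assms by (intro rel1_right) auto
    show ?thesis
      by (rule ideal_cancel[OF f1], rule ideal_cancel[OF f2],
        (simp add: tens assms g.br_sm_left algebra_simps rel_ideal_zero; fail))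
  next
    case (curl h)
    have f1: "cg (sm c (br g h)) - fm_smult c (cg (br g h)) \<in> I" using curl assms by (intro cg_smult) auto
    show ?thesis
      by (rule ideal_cancel[OF f1], (simp add: curl assms g.br_sm_left algebra_simps rel_ideal_zero; fail))
  qed
qed (simp_all add: algebra_simps)

lemma act_br:
  assumes "g1 \<in> C" "g2 \<in> C"
  shows "act_fm (br g1 g2) p - (act_fm g1 (act_fm g2 p) - act_fm g2 (act_fm g1 p)) \<in> I"
proof (rule linear_into_I[where \<Phi>="\<lambda>p. act_fm (br g1 g2) p - (act_fm g1 (act_fm g2 p) - act_fm g2 (act_fm g1 p))"])
  fix a assume "a \<in> I"
  then show "act_fm (br g1 g2) a - (act_fm g1 (act_fm g2 a) - act_fm g2 (act_fm g1 a)) \<in> I"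
    using assms by (intro rel_ideal_diff act_rel_ideal) auto
next
  fix x show "act_fm (br g1 g2) (fm_gen x) - (act_fm g1 (act_fm g2 (fm_gen x)) - act_fm g2 (act_fm g1 (fm_gen x))) \<in> I"
  proof (cases x rule: qgens_cases)
    case non_gen then show ?thesis by (simp add: act_gen_non_gen rel_ideal_zero)
  next
    case (tens h g)
    have f1: "tg (br (br g1 g2) h) g - (tg (br g1 (br g2 h)) g - tg (br g2 (br g1 h)) g) \<in> I"
      using tens assms by (intro rel2_diff) (auto simp: g.br_br_left[of g1 g2 h])
    have f2: "tg h (br (br g1 g2) g) - (tg h (br g1 (br g2 g)) - tg h (br g2 (br g1 g))) \<in> I"
      using tens assms by (intro rel3_diff) (auto simp: g.br_br_left[of g1 g2 g])
    show ?thesis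
      by (rule ideal_cancel[OF f1], rule ideal_cancel[OF f2],
        (simp add: tens assms algebra_simps rel_ideal_zero; fail))
  next
    case (curl h)
    have f1: "cg (br (br g1 g2) h) - (cg (br g1 (br g2 h)) - cg (br g2 (br g1 h))) \<in> I"
      using curl assms by (intro cg_diff) (auto simp: g.br_br_left[of g1 g2 h])
    show ?thesis
      by (rule ideal_cancel[OF f1], (simp add: curl assms algebra_simps rel_ideal_zero; fail))
  qed
qed (simp_all add: algebra_simps)

lemma xi_fm_act:
  assumes "g \<in> C"
  shows "xi_fm (act_fm g p) = br g (xi_fm p)"
proof (rule induct_mod_I[where Q="\<lambda>p. xi_fm (act_fm g p) = br g (xi_fm p)"])
  fix a b assume ab: "a - b \<in> I" and "xi_fm (act_fm g a) = br g (xi_fm a)"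
  moreover have "xi_fm (act_fm g a) = xi_fm (act_fm g b)"
    using act_rel_ideal[OF assms ab] by (intro xi_fm_congruent) simp
  moreover have "xi_fm a = xi_fm b" using ab by (rule xi_fm_congruent)
  ultimately show "xi_fm (act_fm g b) = br g (xi_fm b)" by simp
next
  fix x show "xi_fm (act_fm g (fm_gen x)) = br g (xi_fm (fm_gen x))"
  proof (cases x rule: qgens_cases)
    case non_gen then show ?thesis using assms by (simp add: act_gen_non_gen xi_gen_non_gen)
  next
    case (tens h g')
    then show ?thesis using assms by (simp add: g.br_leibniz[of g h g'])
  next
    case (curl h)
    then show ?thesis using assms by (simp add: g.br_sm_right)
  qed
qed (use assms in \<open>simp_all add: g.br_add_right g.br_sm_right\<close>)

lemma act_zero: "act_fm (lzero G) p \<in> I"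
proof (rule linear_into_I[where \<Phi>="act_fm (lzero G)"])
  fix a assume "a \<in> I" then show "act_fm (lzero G) a \<in> I" by (intro act_rel_ideal) auto
next
  fix x show "act_fm (lzero G) (fm_gen x) \<in> I"
    by (cases x rule: qgens_cases) (auto simp: act_gen_non_gen rel_ideal_zero intro!: rel_ideal_add tg_zero_left tg_zero_right cg_zero)
qed simp_all

subsection \<open>The Peiffer identity\<close>

lemma peiffer_tg_tg:
  assumes "h \<in> H" "g \<in> C" "h' \<in> H" "g' \<in> C"
  shows "act_fm (br h g) (tg h' g') - fm_br (tg h g) (tg h' g') \<in> I"
proof -
  have f1: "fm_br (tg h g) (tg h' g') - tg (br h g) (br h' g') \<in> I"
    using assms by (intro rel6) auto
  have f2: "tg (br (br h g) h') g' - (tg (br h g) (br h' g') - tg h' (br (br h g) g')) \<in> I"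
    using assms by (intro rel4) auto
  show ?thesis
    by (rule ideal_cancel[OF f1], rule ideal_cancel[OF f2],
        (simp add: assms algebra_simps rel_ideal_zero; fail))
qed

text \<open>By (7) and (4), \<open>[h \<otimes> g, {h'}] = - q h' \<otimes> [h, g]\<close>, which is \<open>- {[h', [h, g]]}\<close> by (1)
  and (10), and \<open>{[[h, g], h']}\<close> by antisymmetry and (8).\<close>
lemma peiffer_tg_cg:
  assumes "h \<in> H" "g \<in> C" "h' \<in> H"
  shows "act_fm (br h g) (cg h') - fm_br (tg h g) (cg h') \<in> I"
proof -
  let ?x = "br h g"
  have f1: "fm_br (tg h g) (cg h') + fm_br (cg h') (tg h g) \<in> I"
    by (rule rel_ideal_br_anticomm)
  have f2: "fm_br (cg h') (tg h g) - (tg (br (sm qs h') h) g + tg h (br (sm qs h') g)) \<in> I"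
    using assms by (intro rel7) auto
  have f3: "tg (br (sm qs h') h) g - (tg (sm qs h') (br h g) - tg h (br (sm qs h') g)) \<in> I"
    using assms by (intro rel4) auto
  have f4: "fm_smult qs (tg h' ?x) - tg (sm qs h') ?x \<in> I"
    using assms by (intro rel1_left) auto
  have f5: "cg (br h' ?x) - fm_smult qs (tg h' ?x) \<in> I"
    using assms by (intro rel10) auto
  have f6: "cg (ad (br ?x h') (br h' ?x)) - (cg (br ?x h') + cg (br h' ?x)) \<in> I"
    using assms by (intro cg_add) auto
  have f7: "cg (ad (br ?x h') (br h' ?x)) \<in> I"
    using assms by (intro cg_zeroI) (simp add: g.br_anticomm[of ?x h'])
  show ?thesis
    by (rule ideal_cancel[OF f1], rule ideal_cancel[OF f2], rule ideal_cancel[OF f3],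
        rule ideal_cancel[OF f4], rule ideal_cancel[OF f5], rule ideal_cancel[OF f6],
        rule ideal_cancel[OF f7], (simp add: assms algebra_simps rel_ideal_zero; fail))
qed

lemma peiffer_cg_tg:
  assumes "h \<in> H" "h' \<in> H" "g' \<in> C"
  shows "act_fm (sm qs h) (tg h' g') - fm_br (cg h) (tg h' g') \<in> I"
proof -
  have f1: "fm_br (cg h) (tg h' g') - (tg (br (sm qs h) h') g' + tg h' (br (sm qs h) g')) \<in> I"
    using assms by (intro rel7) auto
  show ?thesis
    by (rule ideal_cancel[OF f1], (simp add: assms algebra_simps rel_ideal_zero; fail))
qed

lemma peiffer_cg_cg:
  assumes "h \<in> H" "h' \<in> H"
  shows "act_fm (sm qs h) (cg h') - fm_br (cg h) (cg h') \<in> I"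
proof -
  have f1: "fm_br (cg h) (cg h') - tg (sm qs h) (sm qs h') \<in> I"
    using assms by (intro rel9) auto
  have f2: "cg (br (sm qs h) h') - fm_smult qs (tg (sm qs h) h') \<in> I"
    using assms by (intro rel10) auto
  have f3: "fm_smult qs (tg (sm qs h) h') - tg (sm qs h) (sm qs h') \<in> I"
    using assms by (intro rel1_right) auto
  show ?thesis
    by (rule ideal_cancel[OF f1], rule ideal_cancel[OF f2], rule ideal_cancel[OF f3],
        (simp add: assms algebra_simps rel_ideal_zero; fail))
qed

lemma peiffer_gens: "act_fm (xi_gen x) (fm_gen y) - fm_br (fm_gen x) (fm_gen y) \<in> I"
proof (cases x rule: qgens_cases)
  case non_gen
  then show ?thesis
    using act_zero[of "fm_gen y"] rel_ideal_br_right[OF rel_non_gen[OF non_gen]]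
    by (simp add: xi_gen_non_gen rel_ideal_diff)
next
  case x: (tens h g)
  show ?thesis
  proof (cases y rule: qgens_cases)
    case non_gen
    then show ?thesis
      using rel_ideal_br_left[OF rel_non_gen[OF non_gen]] by (simp add: act_gen_non_gen rel_ideal_neg)
  qed (use x peiffer_tg_tg peiffer_tg_cg in auto)
next
  case x: (curl h)
  show ?thesis
  proof (cases y rule: qgens_cases)
    case non_gen
    then show ?thesis
      using rel_ideal_br_left[OF rel_non_gen[OF non_gen]] by (simp add: act_gen_non_gen rel_ideal_neg)
  qed (use x peiffer_cg_tg peiffer_cg_cg in auto)
qed

lemma peiffer_gen: "act_fm (xi_gen x) p - fm_br (fm_gen x) p \<in> I"
proof (rule linear_into_I[where \<Phi>="\<lambda>p. act_fm (xi_gen x) p - fm_br (fm_gen x) p"])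
  fix a assume "a \<in> I"
  then show "act_fm (xi_gen x) a - fm_br (fm_gen x) a \<in> I"
    by (intro rel_ideal_diff act_rel_ideal rel_ideal_br_left) auto
qed (use peiffer_gens in \<open>simp_all add: algebra_simps\<close>)

lemma peiffer: "act_fm (xi_fm p) p' - fm_br p p' \<in> I"
proof (rule induct_mod_I[where Q="\<lambda>p. act_fm (xi_fm p) p' - fm_br p p' \<in> I"])
  fix a b assume ab: "a - b \<in> I" and "act_fm (xi_fm a) p' - fm_br a p' \<in> I"
  then have "(act_fm (xi_fm a) p' - fm_br a p') + fm_br (a - b) p' \<in> I"
    by (intro rel_ideal_add rel_ideal_br_right)
  then show "act_fm (xi_fm b) p' - fm_br b p' \<in> I"
    using xi_fm_congruent[OF ab] by (simp add: algebra_simps)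
next
  fix a b
  assume "act_fm (xi_fm a) p' - fm_br a p' \<in> I" "act_fm (xi_fm b) p' - fm_br b p' \<in> I"
  then have "(act_fm (ad (xi_fm a) (xi_fm b)) p'
        - (act_fm (xi_fm a) p' + act_fm (xi_fm b) p'))
      + (act_fm (xi_fm a) p' - fm_br a p') + (act_fm (xi_fm b) p' - fm_br b p') \<in> I"
    by (intro rel_ideal_add act_add) auto
  then show "act_fm (xi_fm (a + b)) p' - fm_br (a + b) p' \<in> I"
    by (simp add: algebra_simps)
next
  fix c a assume "act_fm (xi_fm a) p' - fm_br a p' \<in> I"
  then have "(act_fm (sm c (xi_fm a)) p' - fm_smult c (act_fm (xi_fm a) p'))
      + fm_smult c (act_fm (xi_fm a) p' - fm_br a p') \<in> I"
    by (intro rel_ideal_add act_smult rel_ideal_smult) auto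
  then show "act_fm (xi_fm (fm_smult c a)) p' - fm_br (fm_smult c a) p' \<in> I"
    by (simp add: algebra_simps)
qed (simp_all add: act_zero peiffer_gen)

lemma smult_q_congruent_cg_gen: "fm_smult qs (fm_gen x) - cg (xi_gen x) \<in> I"
proof (cases x rule: qgens_cases)
  case non_gen
  then show ?thesis
    using rel_ideal_diff[OF rel_ideal_smult[OF rel_non_gen[OF non_gen]] cg_zero] by (simp add: xi_gen_non_gen)
next
  case (tens h g)
  then show ?thesis using rel_ideal_neg[OF rel10[of h g]] by simp
next
  case (curl h)
  then show ?thesis using rel_ideal_neg[OF cg_smult[of h "sm qs h" qs]] by simp
qed

lemma smult_q_congruent_cg_xi: "fm_smult qs p - cg (xi_fm p) \<in> I"
proof (rule induct_mod_I[where Q="\<lambda>p. fm_smult qs p - cg (xi_fm p) \<in> I"])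
  fix a b assume ab: "a - b \<in> I" and a: "fm_smult qs a - cg (xi_fm a) \<in> I"
  have "(fm_smult qs a - cg (xi_fm a)) - fm_smult qs (a - b) \<in> I"
    by (rule rel_ideal_diff[OF a rel_ideal_smult[OF ab]])
  then show "fm_smult qs b - cg (xi_fm b) \<in> I"
    using xi_fm_congruent[OF ab] by (simp add: algebra_simps)
next
  show "fm_smult qs 0 - cg (xi_fm 0) \<in> I"
    using rel_ideal_neg[OF cg_zero] by simp
next
  fix a b assume a: "fm_smult qs a - cg (xi_fm a) \<in> I" and b: "fm_smult qs b - cg (xi_fm b) \<in> I"
  have cg: "cg (ad (xi_fm a) (xi_fm b)) - (cg (xi_fm a) + cg (xi_fm b)) \<in> I"
    by (intro cg_add xi_fm_in_H) simp
  have "(fm_smult qs a - cg (xi_fm a)) + (fm_smult qs b - cg (xi_fm b))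
      - (cg (ad (xi_fm a) (xi_fm b)) - (cg (xi_fm a) + cg (xi_fm b))) \<in> I"
    by (rule rel_ideal_diff[OF rel_ideal_add[OF a b] cg])
  then show "fm_smult qs (a + b) - cg (xi_fm (a + b)) \<in> I"
    by (simp add: algebra_simps)
next
  fix c a assume a: "fm_smult qs a - cg (xi_fm a) \<in> I"
  have cg: "cg (sm c (xi_fm a)) - fm_smult c (cg (xi_fm a)) \<in> I"
    by (intro cg_smult xi_fm_in_H) simp
  have "fm_smult c (fm_smult qs a - cg (xi_fm a))
      - (cg (sm c (xi_fm a)) - fm_smult c (cg (xi_fm a))) \<in> I"
    by (rule rel_ideal_diff[OF rel_ideal_smult[OF a] cg])
  then show "fm_smult qs (fm_smult c a) - cg (xi_fm (fm_smult c a)) \<in> I"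
    by (simp add: algebra_simps mult.commute)
qed (simp add: smult_q_congruent_cg_gen)

definition act :: "'a \<Rightarrow> ('a qgen, 'r) fm set \<Rightarrow> ('a qgen, 'r) fm set" where
  "act g A = rel_class rels (act_fm g (fm_rep A))"
definition xi :: "('a qgen, 'r) fm set \<Rightarrow> 'a" where
  "xi A = xi_fm (fm_rep A)"

lemma act_rel_class: "g \<in> C \<Longrightarrow> act g (rel_class rels p) = rel_class rels (act_fm g p)"
  unfolding act_def by (rule rel_class_act_fm_rep)
lemma xi_rel_class: "xi (rel_class rels p) = xi_fm p"
  unfolding xi_def by (rule xi_fm_fm_rep)

lemma lie_action_act: "lie_action G (presented_lie rels) act"
  unfolding lie_action_def ball_presented_lie
  by (auto simp: act_rel_class rel_class_eq_iff act_add act_smult act_br)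

lemma lie_hom_xi: "lie_hom (presented_lie rels) G xi"
  unfolding xi_def by (rule lie_hom_xi_fm_rep)

lemma q_crossed_module_xi_act: "q_crossed_module q (presented_lie rels) G xi act"
  unfolding q_crossed_module_def ball_presented_lie
proof (intro conjI ballI allI impI)
  fix g p assume "g \<in> C"
  then show "xi (act g (rel_class rels p)) = br g (xi (rel_class rels p))"
    by (simp add: act_rel_class xi_rel_class xi_fm_act)
next
  fix p p'
  show "act (xi (rel_class rels p)) (rel_class rels p') =
      lbr (presented_lie rels) (rel_class rels p) (rel_class rels p')"
    by (simp add: xi_rel_class act_rel_class rel_class_eq_iff peiffer)
next
  fix p assume "xi (rel_class rels p) = lzero G"
  then have "fm_smult qs p - cg (lzero G) \<in> I"
    using smult_q_congruent_cg_xi[of p] by (simp add: xi_rel_class)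
  then have "fm_smult qs p \<in> I"
    using rel_ideal_add[OF _ cg_zero] by (metis diff_add_cancel)
  then show "lsmult (presented_lie rels) (of_int q) (rel_class rels p) = lzero (presented_lie rels)"
    by (simp add: rel_class_eq_iff)
qed (simp_all add: lie_algebra_presented_lie lie_G lie_hom_xi lie_action_act)

theorem presented_q_crossed_module:
  "\<exists>act \<xi>. lie_action G (presented_lie rels) act \<and>
     (\<forall>g'\<in>C. \<forall>h\<in>H. \<forall>g\<in>C. act g' (presented_gen rels (QT h g)) =
        ladd (presented_lie rels) (presented_gen rels (QT (br g' h) g)) (presented_gen rels (QT h (br g' g)))) \<and>
     (\<forall>g\<in>C. \<forall>h\<in>H. act g (presented_gen rels (QC h)) = presented_gen rels (QC (br g h))) \<and>
     lie_hom (presented_lie rels) G \<xi> \<and>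
     (\<forall>h\<in>H. \<forall>g\<in>C. \<xi> (presented_gen rels (QT h g)) = br h g) \<and>
     (\<forall>h\<in>H. \<xi> (presented_gen rels (QC h)) = sm (of_int q) h) \<and>
     q_crossed_module q (presented_lie rels) G \<xi> act"
proof (rule exI[of _ act], rule exI[of _ xi], intro conjI ballI)
  fix g' h g assume "g' \<in> C" "h \<in> H" "g \<in> C"
  then show "act g' (presented_gen rels (QT h g)) =
      ladd (presented_lie rels) (presented_gen rels (QT (br g' h) g)) (presented_gen rels (QT h (br g' g)))"
    by (simp add: presented_gen_def act_rel_class)
next
  fix g h assume "g \<in> C" "h \<in> H"
  then show "act g (presented_gen rels (QC h)) = presented_gen rels (QC (br g h))"
    by (simp add: presented_gen_def act_rel_class)
qed (simp_all add: presented_gen_def xi_rel_class lie_action_act lie_hom_xi q_crossed_module_xi_act)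

end

theorem proposition2p5:
  fixes G :: "('a, 'r::comm_ring_1) lie" and H :: "'a set" and q :: int
  assumes "lie_algebra G" and "lie_ideal G H" and "q \<ge> 1"
  shows "(\<exists>act \<xi>.
            lie_action G (qtensor G H q) act \<and>
            (\<forall>g'\<in>lcarrier G. \<forall>h\<in>H. \<forall>g\<in>lcarrier G.
               act g' (tens G H q h g) =
               ladd (qtensor G H q) (tens G H q (lbr G g' h) g) (tens G H q h (lbr G g' g))) \<and>
            (\<forall>g\<in>lcarrier G. \<forall>h\<in>H. act g (tcurl G H q h) = tcurl G H q (lbr G g h)) \<and>
            lie_hom (qtensor G H q) G \<xi> \<and>
            (\<forall>h\<in>H. \<forall>g\<in>lcarrier G. \<xi> (tens G H q h g) = lbr G h g) \<and>
            (\<forall>h\<in>H. \<xi> (tcurl G H q h) = lsmult G (of_int q) h) \<and>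
            q_crossed_module q (qtensor G H q) G \<xi> act)
       \<and> (\<exists>act \<xi>.
            lie_action G (qwedge G H q) act \<and>
            (\<forall>g'\<in>lcarrier G. \<forall>h\<in>H. \<forall>g\<in>lcarrier G.
               act g' (wedg G H q h g) =
               ladd (qwedge G H q) (wedg G H q (lbr G g' h) g) (wedg G H q h (lbr G g' g))) \<and>
            (\<forall>g\<in>lcarrier G. \<forall>h\<in>H. act g (wcurl G H q h) = wcurl G H q (lbr G g h)) \<and>
            lie_hom (qwedge G H q) G \<xi> \<and>
            (\<forall>h\<in>H. \<forall>g\<in>lcarrier G. \<xi> (wedg G H q h g) = lbr G h g) \<and>
            (\<forall>h\<in>H. \<xi> (wcurl G H q h) = lsmult G (of_int q) h) \<and>
            q_crossed_module q (qwedge G H q) G \<xi> act)"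
proof -
  interpret tensor: qtensor_pres G H q "{}"
    using assms by unfold_locales auto
  interpret wedge: qtensor_pres G H q "{fm_gen (QT h h) | h. h \<in> H}"
    using assms by unfold_locales auto
  show ?thesis
    using tensor.presented_q_crossed_module wedge.presented_q_crossed_module
    by (simp add: qtensor_def tens_def tcurl_def qwedge_def qwedge_rels_def wedg_def wcurl_def)
qed

end
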